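(* In the cargo–motor model described in the context, let $x(t):=\mathbb{E}[X(t)\mid\mathbf{J}]$ and $z_i(t):=\mathbb{E}[Z_i(t)\mid\mathbf{J}]$ for $t\ge0$, $i\in\{1,\dots,M\}$ (conditional expectations given the whole path of the jump process $\mathbf{J}$, i.e. averages over $W$). Then for each $t>0$, $$\frac{\mathrm{d}}{\mathrm{d}t}x(t)=\varepsilon^{-1}\sum_{i=1}^M\big(z_i(t)-x(t)\big)\quad\text{almost surely}.$$
   Context: Model. Fix an integer $M\ge1$, constants $\varepsilon>0$, $\sigma>0$, and positive rates $\lambda_{\text{on}}(m),\lambda_{\text{off}}(m),\lambda_{\text{step}}(m)>0$ for $m\in\{0,1,\dots,M\}$. Let $\mathbf{J}(t)=(J_1(t),\dots,J_M(t))$ be a continuous-time Markov jump process, each component taking values in $\{u,0,1,2,\dots\}$, with $J_i(0)=u$ for all $i$. Let $m(t)=\sum_{i=1}^M 1_{\{J_i(t)\neq u\}}$. Each component jumps, independently of the others given $m(t)$, with rates $u\to0$ at rate $\lambda_{\text{on}}(m(t))$, $j\to j+1$ at rate $\lambda_{\text{step}}(m(t))$ and $j\to u$ at rate $\lambda_{\text{off}}(m(t))$ for $j\ge0$. Let $W$ be a standard Brownian motion independent of $\mathbf{J}$. Let $\tau_i(t)=\sup\{s<t:J_i(s)=u\}$. The cargo position $X$, with $X(0)=0$, solves $\mathrm{d}X(t)=\varepsilon^{-1}\sum_{i=1}^M(Z_i(t)-X(t))\,\mathrm{d}t+\sigma\,\mathrm{d}W(t)$, where $Z_i(0)=0$ and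 $Z_i(t)=(X(\tau_i(t))+J_i(t))1_{\{J_i(t)\neq u\}}+X(t)1_{\{J_i(t)=u\}}$. *)

theory Defs
  imports "HOL-Probability.Probability"
begin

text \<open>Motor states: component i of a state is None (= unbound, u) or Some j (bound, j steps taken).
  Only components i in {1..M} are relevant.\<close>
type_synonym mstate = "nat \<Rightarrow> nat option"

definition occ :: "nat \<Rightarrow> mstate \<Rightarrow> nat" where
  "occ M s = card {i \<in> {1..M}. s i \<noteq> None}"

definition jrate :: "nat \<Rightarrow> (nat \<Rightarrow> real) \<Rightarrow> (nat \<Rightarrow> real) \<Rightarrow> (nat \<Rightarrow> real)
    \<Rightarrow> mstate \<Rightarrow> mstate \<Rightarrow> real" where
  "jrate M lon loff lstep s s2 =
     (\<Sum>i\<in>{1..M}. (case s i of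
        None \<Rightarrow> (if s2 = s(i := Some 0) then lon (occ M s) else 0)
      | Some j \<Rightarrow> (if s2 = s(i := Some (Suc j)) then lstep (occ M s) else 0)
                 + (if s2 = s(i := None) then loff (occ M s) else 0)))"

definition exit_rate :: "nat \<Rightarrow> (nat \<Rightarrow> real) \<Rightarrow> (nat \<Rightarrow> real) \<Rightarrow> (nat \<Rightarrow> real)
    \<Rightarrow> mstate \<Rightarrow> real" where
  "exit_rate M lon loff lstep s =
     (\<Sum>i\<in>{1..M}. (case s i of None \<Rightarrow> lon (occ M s) | Some j \<Rightarrow> lstep (occ M s) + loff (occ M s)))"

definition Qgen :: "nat \<Rightarrow> (nat \<Rightarrow> real) \<Rightarrow> (nat \<Rightarrow> real) \<Rightarrow> (nat \<Rightarrow> real)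
    \<Rightarrow> mstate \<Rightarrow> mstate \<Rightarrow> real" where
  "Qgen M lon loff lstep s s2 =
     jrate M lon loff lstep s s2 - (if s2 = s then exit_rate M lon loff lstep s else 0)"

text \<open>The finitely many states reachable from s in at most one jump (Q s r = 0 outside).\<close>
definition nbr :: "nat \<Rightarrow> mstate \<Rightarrow> mstate set" where
  "nbr M s = insert s ((\<lambda>i. s(i := Some 0)) ` {1..M} \<union> (\<lambda>i. s(i := None)) ` {1..M}
                       \<union> (\<lambda>i. s(i := map_option Suc (s i))) ` {1..M})"

fun Qpow :: "nat \<Rightarrow> (nat \<Rightarrow> real) \<Rightarrow> (nat \<Rightarrow> real) \<Rightarrow> (nat \<Rightarrow> real)
    \<Rightarrow> nat \<Rightarrow> mstate \<Rightarrow> mstate \<Rightarrow> real" where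
  "Qpow M lon loff lstep 0 s s2 = (if s = s2 then 1 else 0)"
| "Qpow M lon loff lstep (Suc n) s s2 =
     (\<Sum>r\<in>nbr M s. Qgen M lon loff lstep s r * Qpow M lon loff lstep n r s2)"

text \<open>Transition function P_t = exp(t Q) (rates are bounded, so the series converges).\<close>
definition transP :: "nat \<Rightarrow> (nat \<Rightarrow> real) \<Rightarrow> (nat \<Rightarrow> real) \<Rightarrow> (nat \<Rightarrow> real)
    \<Rightarrow> real \<Rightarrow> mstate \<Rightarrow> mstate \<Rightarrow> real" where
  "transP M lon loff lstep t s s2 = (\<Sum>n. t ^ n / fact n * Qpow M lon loff lstep n s s2)"

definition tau :: "(real \<Rightarrow> mstate) \<Rightarrow> nat \<Rightarrow> real \<Rightarrow> real" where
  "tau j i t = Sup {s. 0 \<le> s \<and> s < t \<and> j s i = None}"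

definition cargoZ :: "(real \<Rightarrow> mstate) \<Rightarrow> (real \<Rightarrow> real) \<Rightarrow> nat \<Rightarrow> real \<Rightarrow> real" where
  "cargoZ j X i t = (case j t i of None \<Rightarrow> X t | Some n \<Rightarrow> X (tau j i t) + real n)"

text \<open>Markov jump process with the model's rates, started at all-unbound: measurable,
  cadlag piecewise-constant paths, and finite-dimensional distributions given by P_t.\<close>
definition motor_process :: "nat \<Rightarrow> (nat \<Rightarrow> real) \<Rightarrow> (nat \<Rightarrow> real) \<Rightarrow> (nat \<Rightarrow> real)
    \<Rightarrow> 'w measure \<Rightarrow> ('w \<Rightarrow> real \<Rightarrow> mstate) \<Rightarrow> bool" where
  "motor_process M lon loff lstep P J \<longleftrightarrow>
     (\<forall>t. (\<lambda>\<omega>. J \<omega> t) \<in> measurable P (count_space UNIV)) \<and>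
     (\<forall>\<omega>\<in>space P. J \<omega> 0 = (\<lambda>_. None)
        \<and> (\<forall>t\<ge>0. \<exists>d>0. \<forall>s. t \<le> s \<and> s < t + d \<longrightarrow> J \<omega> s = J \<omega> t)
        \<and> (\<forall>t>0. \<exists>d>0. \<forall>s. t - d < s \<and> s < t \<longrightarrow> J \<omega> s = J \<omega> (t - d / 2))) \<and>
     (\<forall>n (t::nat \<Rightarrow> real) (st::nat \<Rightarrow> mstate).
        t 0 = 0 \<longrightarrow> (\<forall>k<n. t k < t (Suc k)) \<longrightarrow> st 0 = (\<lambda>_. None) \<longrightarrow>
        measure P {\<omega> \<in> space P. \<forall>k\<in>{1..n}. J \<omega> (t k) = st k}
          = (\<Prod>k<n. transP M lon loff lstep (t (Suc k) - t k) (st k) (st (Suc k))))"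

definition brownian :: "'w measure \<Rightarrow> ('w \<Rightarrow> real \<Rightarrow> real) \<Rightarrow> bool" where
  "brownian P W \<longleftrightarrow>
     (\<forall>\<omega>\<in>space P. W \<omega> 0 = 0 \<and> continuous_on {0..} (W \<omega>)) \<and>
     (\<forall>n (t::nat \<Rightarrow> real). 0 \<le> t 0 \<longrightarrow> (\<forall>k<n. t k < t (Suc k)) \<longrightarrow>
        prob_space.indep_vars P (\<lambda>_. borel) (\<lambda>k \<omega>. W \<omega> (t (Suc k)) - W \<omega> (t k)) {..<n} \<and>
        (\<forall>k<n. distributed P lborel (\<lambda>\<omega>. W \<omega> (t (Suc k)) - W \<omega> (t k))
                  (normal_density 0 (sqrt (t (Suc k) - t k)))))"

end

theory Submission
  imports Defs
begin

text \<open>Fix a path of the motor process at which \<open>t\<close> is not a jump time; almost every path is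
  of this kind, since the probability of a change of state in \<open>(t - h, t]\<close> is
  \<open>O(h)\<close> by the bounded rates. Near \<open>t\<close> the configuration is frozen, so the drift is
  affine in the cargo position, \<open>(A - k X) / \<epsilon>\<close> with the anchor sum \<open>A\<close> and \<open>k\<close> bound
  motors. The noise term is removed by passing to
  \<open>Z = X - \<sigma> W + (k \<sigma> / \<epsilon>) \<integral> W\<close>, which has the expectation of \<open>X\<close> and is an indefinite
  integral of \<open>(A - k (X - \<sigma> W)) / \<epsilon>\<close>. A Gronwall argument bounds \<open>X - \<sigma> W\<close> by an integrable
  functional of \<open>W\<close> (finitely many binding times and step counts occur up to a fixed time),
  so dominated convergence lets us differentiate the expectation under the integral.\<close>

section \<open>Analysis\<close>

lemma LIMSEQ_ceiling_div:
  fixes r :: real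
  shows "(\<lambda>n. of_int \<lceil>real (Suc n) * r\<rceil> / real (Suc n)) \<longlonglongrightarrow> r"
proof (rule tendsto_sandwich[of "\<lambda>n. r" _ _ "\<lambda>n. r + inverse (real (Suc n))"])
  show "\<forall>\<^sub>F n in sequentially. r \<le> of_int \<lceil>real (Suc n) * r\<rceil> / real (Suc n)"
  proof (intro always_eventually allI)
    fix n
    have "real (Suc n) * r \<le> of_int \<lceil>real (Suc n) * r\<rceil>" by (rule le_of_int_ceiling)
    then show "r \<le> of_int \<lceil>real (Suc n) * r\<rceil> / real (Suc n)"
      by (simp add: field_simps del: of_nat_Suc)
  qed
  show "\<forall>\<^sub>F n in sequentially. of_int \<lceil>real (Suc n) * r\<rceil> / real (Suc n) \<le> r + inverse (real (Suc n))"
  proof (intro always_eventually allI)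
    fix n
    have "of_int \<lceil>real (Suc n) * r\<rceil> \<le> real (Suc n) * r + 1" by linarith
    then show "of_int \<lceil>real (Suc n) * r\<rceil> / real (Suc n) \<le> r + inverse (real (Suc n))"
      by (simp add: field_simps del: of_nat_Suc)
  qed
  show "(\<lambda>n. r + inverse (real (Suc n))) \<longlonglongrightarrow> r"
    using tendsto_add[OF tendsto_const LIMSEQ_inverse_real_of_nat, of r] by simp
qed simp

text \<open>A process with continuous paths and measurable marginals is jointly measurable: it is the
  pointwise limit of its evaluations on the grids \<open>\<int> / (n + 1)\<close>, which are countably-valued.\<close>
lemma borel_measurable_continuous_paths:
  fixes X :: "'b \<Rightarrow> real \<Rightarrow> real"
  assumes cont: "\<And>\<omega>. \<omega> \<in> space M \<Longrightarrow> continuous_on {0..} (X \<omega>)"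
    and meas: "\<And>r. 0 \<le> r \<Longrightarrow> (\<lambda>\<omega>. X \<omega> r) \<in> borel_measurable M"
  shows "(\<lambda>p. X (fst p) (max 0 (snd p))) \<in> borel_measurable (M \<Otimes>\<^sub>M lborel)"
proof (rule borel_measurable_LIMSEQ_real)
  let ?g = "\<lambda>n (r::real). max 0 (of_int \<lceil>real (Suc n) * r\<rceil> / real (Suc n))"
  show "(\<lambda>p. X (fst p) (?g n (snd p))) \<in> borel_measurable (M \<Otimes>\<^sub>M lborel)" for n
  proof -
    have "(\<lambda>p. X (fst p) (max 0 (of_int i / real (Suc n)))) \<in> borel_measurable (M \<Otimes>\<^sub>M lborel)"
      for i :: int
      by (rule measurable_compose[OF measurable_fst meas]) simp
    moreover have "(\<lambda>p. \<lceil>real (Suc n) * snd p\<rceil>) \<in> measurable (M \<Otimes>\<^sub>M lborel) (count_space UNIV)"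
      by measurable
    ultimately show ?thesis
      by (rule measurable_compose_countable)
  qed
  show "(\<lambda>n. X (fst p) (?g n (snd p))) \<longlonglongrightarrow> X (fst p) (max 0 (snd p))"
    if "p \<in> space (M \<Otimes>\<^sub>M lborel)" for p
  proof -
    have "fst p \<in> space M" using that by (auto simp: space_pair_measure)
    moreover have "(\<lambda>n. ?g n (snd p)) \<longlonglongrightarrow> max 0 (snd p)"
      by (intro tendsto_max tendsto_const LIMSEQ_ceiling_div)
    ultimately show ?thesis
      by (auto intro: continuous_on_tendsto_compose[OF cont, simplified o_def])
  qed
qed

locale integrable_continuous_process = prob_space P for P :: "'b measure" +
  fixes X :: "'b \<Rightarrow> real \<Rightarrow> real" and lo hi C :: real
  assumes lo: "0 \<le> lo"
    and cont: "\<And>\<omega>. \<omega> \<in> space P \<Longrightarrow> continuous_on {0..} (X \<omega>)"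
    and meas: "\<And>r. 0 \<le> r \<Longrightarrow> (\<lambda>\<omega>. X \<omega> r) \<in> borel_measurable P"
    and integrable: "\<And>r. r \<in> {lo..hi} \<Longrightarrow> integrable P (\<lambda>\<omega>. X \<omega> r)"
    and abs_moment: "\<And>r. r \<in> {lo..hi} \<Longrightarrow> (\<integral>\<omega>. \<bar>X \<omega> r\<bar> \<partial>P) \<le> C"
begin

definition truncated_path :: "'b \<Rightarrow> real \<Rightarrow> real" where
  "truncated_path \<omega> r = indicator {lo..hi} r * X \<omega> (max 0 r)"

sublocale pair: pair_sigma_finite P lborel
  by (simp add: pair_sigma_finite_def prob_space_imp_sigma_finite prob_space_axioms
      lborel.sigma_finite_measure_axioms)

lemma integrable_truncated_path: "integrable (P \<Otimes>\<^sub>M lborel) (\<lambda>(\<omega>, r). truncated_path \<omega> r)"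
proof (rule integrableI_bounded)
  show "(\<lambda>(\<omega>, r). truncated_path \<omega> r) \<in> borel_measurable (P \<Otimes>\<^sub>M lborel)"
    using borel_measurable_continuous_paths[OF cont meas]
    unfolding truncated_path_def by (simp add: split_beta')
  then have "(\<integral>\<^sup>+ p. ennreal (norm ((\<lambda>(\<omega>, r). truncated_path \<omega> r) p)) \<partial>(P \<Otimes>\<^sub>M lborel))
      = (\<integral>\<^sup>+ r. (\<integral>\<^sup>+ \<omega>. ennreal \<bar>truncated_path \<omega> r\<bar> \<partial>P) \<partial>lborel)"
    by (subst pair.nn_integral_snd[symmetric]) (auto simp: split_beta')
  also have "\<dots> \<le> (\<integral>\<^sup>+ r. ennreal (max 0 C) * indicator {lo..hi} r \<partial>lborel)"
  proof (intro nn_integral_mono)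
    fix r
    show "(\<integral>\<^sup>+ \<omega>. ennreal \<bar>truncated_path \<omega> r\<bar> \<partial>P) \<le> ennreal (max 0 C) * indicator {lo..hi} r"
    proof (cases "r \<in> {lo..hi}")
      case True
      then have "(\<integral>\<^sup>+ \<omega>. ennreal \<bar>truncated_path \<omega> r\<bar> \<partial>P) = ennreal (\<integral>\<omega>. \<bar>X \<omega> r\<bar> \<partial>P)"
        using lo integrable[OF True]
        by (subst nn_integral_eq_integral[symmetric]) (auto simp: truncated_path_def)
      also have "\<dots> \<le> ennreal (max 0 C)"
        using abs_moment[OF True] by (intro ennreal_leI) simp
      finally show ?thesis using True by simp
    qed (simp add: truncated_path_def)
  qed
  also have "\<dots> < \<infinity>"
    by (simp add: nn_integral_cmult_indicator ennreal_mult_less_top emeasure_lborel_Icc_eq)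
  finally show "(\<integral>\<^sup>+ p. ennreal (norm ((\<lambda>(\<omega>, r). truncated_path \<omega> r) p)) \<partial>(P \<Otimes>\<^sub>M lborel)) < \<infinity>" .
qed

lemma lebesgue_integral_truncated_path:
  assumes "\<omega> \<in> space P"
  shows "(\<integral>r. truncated_path \<omega> r \<partial>lborel) = integral {lo..hi} (X \<omega>)"
proof -
  have "continuous_on {lo..hi} (X \<omega>)"
    using continuous_on_subset[OF cont[OF assms]] lo by auto
  then have "(LINT r:{lo..hi}|lborel. X \<omega> r) = integral {lo..hi} (X \<omega>)"
    by (intro set_borel_integral_eq_integral(2) borel_integrable_atLeastAtMost')
  moreover have "(\<integral>r. truncated_path \<omega> r \<partial>lborel) = (LINT r:{lo..hi}|lborel. X \<omega> r)"
    unfolding set_lebesgue_integral_def truncated_path_def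
    by (intro Bochner_Integration.integral_cong) (use lo in \<open>auto simp: indicator_def\<close>)
  ultimately show ?thesis by simp
qed

lemma integrable_path_integral: "integrable P (\<lambda>\<omega>. integral {lo..hi} (X \<omega>))"
  using pair.integrable_fst[OF integrable_truncated_path]
  by (subst Bochner_Integration.integrable_cong[OF refl lebesgue_integral_truncated_path[symmetric]]) auto

lemma expectation_path_integral_eq_0:
  assumes "\<And>r. r \<in> {lo..hi} \<Longrightarrow> (\<integral>\<omega>. X \<omega> r \<partial>P) = 0"
  shows "(\<integral>\<omega>. integral {lo..hi} (X \<omega>) \<partial>P) = 0"
proof -
  have "(\<integral>\<omega>. integral {lo..hi} (X \<omega>) \<partial>P) = (\<integral>\<omega>. (\<integral>r. truncated_path \<omega> r \<partial>lborel) \<partial>P)"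
    by (intro Bochner_Integration.integral_cong) (auto simp: lebesgue_integral_truncated_path)
  also have "\<dots> = (\<integral>r. (\<integral>\<omega>. truncated_path \<omega> r \<partial>P) \<partial>lborel)"
    by (rule pair.Fubini_integral[OF integrable_truncated_path, symmetric])
  also have "\<dots> = 0"
  proof -
    have "(\<integral>\<omega>. truncated_path \<omega> r \<partial>P) = 0" for r
      using assms lo by (cases "r \<in> {lo..hi}") (simp_all add: truncated_path_def)
    then show ?thesis by simp
  qed
  finally show ?thesis .
qed

end

lemma continuous_on_has_integral_indefinite:
  fixes f Y :: "real \<Rightarrow> 'a::banach"
  assumes "\<And>s. s \<in> {0..T} \<Longrightarrow> (f has_integral Y s) {0..s}" and "0 \<le> T"
  shows "continuous_on {0..T} Y"
proof -
  have "(f has_integral Y T) {0..T}"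
    by (rule assms(1)) (use assms(2) in auto)
  then have "f integrable_on {0..T}"
    by (rule has_integral_integrable)
  then show ?thesis
    by (rule continuous_on_eq[OF indefinite_integral_continuous_1]) (use assms in \<open>auto intro: integral_unique\<close>)
qed

lemma has_integral_exp_linear:
  fixes L s :: real
  assumes "0 < L" and "0 \<le> s"
  shows "((\<lambda>r. exp (L * r)) has_integral (exp (L * s) - 1) / L) {0..s}"
proof -
  have "((\<lambda>r. exp (L * r)) has_integral (exp (L * s) / L - exp (L * 0) / L)) {0..s}"
  proof (rule fundamental_theorem_of_calculus[OF assms(2)])
    fix x
    have "((\<lambda>r. exp (L * r) / L) has_real_derivative (exp (L * x) * L / L)) (at x within {0..s})"
      by (auto intro!: derivative_eq_intros)
    then show "((\<lambda>r. exp (L * r) / L) has_vector_derivative exp (L * x)) (at x within {0..s})"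
      using assms(1) by (simp add: has_real_derivative_iff_has_vector_derivative)
  qed
  then show ?thesis by (simp add: diff_divide_distrib)
qed

lemma abs_integral_le_of_exp_bound:
  fixes f w :: "real \<Rightarrow> real"
  assumes "0 < K" "0 \<le> H" "0 \<le> s"
    and f: "f integrable_on {0..s}" and w: "w integrable_on {0..s}"
    and bound: "\<And>r. r \<in> {0..s} \<Longrightarrow> \<bar>f r\<bar> \<le> K * H * exp (2 * K * r) + w r"
  shows "\<bar>integral {0..s} f\<bar> \<le> H / 2 * exp (2 * K * s) + integral {0..s} w"
proof -
  define g where "g r = K * H * exp (2 * K * r) + w r" for r
  have "((\<lambda>r. exp (2 * K * r)) has_integral (exp (2 * K * s) - 1) / (2 * K)) {0..s}"
    using assms(1,3) by (intro has_integral_exp_linear) auto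
  then have g: "(g has_integral (K * H * ((exp (2 * K * s) - 1) / (2 * K)) + integral {0..s} w)) {0..s}"
    unfolding g_def by (intro has_integral_add has_integral_mult_right integrable_integral w)
  have "norm (integral {0..s} f) \<le> integral {0..s} g"
    by (rule integral_norm_bound_integral[OF f]) (use g bound in \<open>auto simp: g_def\<close>)
  then have "\<bar>integral {0..s} f\<bar> \<le> integral {0..s} g"
    by simp
  also have "\<dots> = K * H * ((exp (2 * K * s) - 1) / (2 * K)) + integral {0..s} w"
    using g by (rule integral_unique)
  also have "\<dots> \<le> H / 2 * exp (2 * K * s) + integral {0..s} w"
    using assms(1,2) by (simp add: field_simps)
  finally show ?thesis .
qed

text \<open>The proof
  bounds the maximum \<open>H\<close> of \<open>exp (-2 K s) * \<bar>Y s\<bar>\<close>: feeding \<open>\<bar>Y u\<bar> \<le> H exp (2 K u)\<close> into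
  the equation gives \<open>H \<le> H / 2 + \<integral> w\<close>.\<close>
lemma gronwall_past_dependent:
  fixes Y f w :: "real \<Rightarrow> real" and K T :: real
  assumes T: "0 \<le> T" and K: "0 < K"
    and Y: "\<And>s. s \<in> {0..T} \<Longrightarrow> (f has_integral Y s) {0..s}"
    and feedback: "\<And>r B. r \<in> {0..T} \<Longrightarrow> (\<And>u. 0 \<le> u \<Longrightarrow> u \<le> r \<Longrightarrow> \<bar>Y u\<bar> \<le> B) \<Longrightarrow>
        \<bar>f r\<bar> \<le> K * B + w r"
    and w: "continuous_on {0..T} w" "\<And>r. r \<in> {0..T} \<Longrightarrow> 0 \<le> w r"
    and r: "r \<in> {0..T}"
  shows "\<bar>Y r\<bar> \<le> 2 * exp (2 * K * T) * integral {0..T} w"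
proof -
  have Y_eq: "Y s = integral {0..s} f" if "s \<in> {0..T}" for s
    using Y[OF that] by (simp add: integral_unique)
  have "continuous_on {0..T} Y"
    using Y T by (rule continuous_on_has_integral_indefinite)
  then have weighted_cont: "continuous_on {0..T} (\<lambda>s. exp (- 2 * K * s) * \<bar>Y s\<bar>)"
    by (intro continuous_intros)
  obtain s0 where s0: "s0 \<in> {0..T}"
    "\<And>s. s \<in> {0..T} \<Longrightarrow> exp (- 2 * K * s) * \<bar>Y s\<bar> \<le> exp (- 2 * K * s0) * \<bar>Y s0\<bar>"
    using continuous_attains_sup[OF compact_Icc _ weighted_cont] T by auto
  define H where "H = exp (- 2 * K * s0) * \<bar>Y s0\<bar>"
  have "0 \<le> H" unfolding H_def by simp
  have Y_le: "\<bar>Y u\<bar> \<le> H * exp (2 * K * u)" if "u \<in> {0..T}" for u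
    using s0(2)[OF that] unfolding H_def by (simp add: exp_minus field_simps)
  have w_int: "w integrable_on {0..s}" if "s \<in> {0..T}" for s
    using that by (intro integrable_continuous_interval continuous_on_subset[OF w(1)]) auto
  have "\<bar>Y s0\<bar> \<le> H / 2 * exp (2 * K * s0) + integral {0..T} w"
  proof -
    have "\<bar>Y s0\<bar> \<le> H / 2 * exp (2 * K * s0) + integral {0..s0} w"
      unfolding Y_eq[OF s0(1)]
    proof (rule abs_integral_le_of_exp_bound[OF K \<open>0 \<le> H\<close>])
      fix r assume r: "r \<in> {0..s0}"
      have "\<bar>f r\<bar> \<le> K * (H * exp (2 * K * r)) + w r"
      proof (rule feedback)
        fix u assume u: "0 \<le> u" "u \<le> r"
        then have "\<bar>Y u\<bar> \<le> H * exp (2 * K * u)"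
          using r s0(1) by (intro Y_le) auto
        also have "\<dots> \<le> H * exp (2 * K * r)"
          using u \<open>0 \<le> H\<close> K by (intro mult_left_mono) auto
        finally show "\<bar>Y u\<bar> \<le> H * exp (2 * K * r)" .
      qed (use r s0(1) in auto)
      then show "\<bar>f r\<bar> \<le> K * H * exp (2 * K * r) + w r"
        by (simp add: mult.assoc)
    qed (use s0(1) Y[OF s0(1)] w_int[OF s0(1)] in auto)
    also have "integral {0..s0} w \<le> integral {0..T} w"
      using s0(1) w by (intro integral_subset_le w_int) auto
    finally show ?thesis by simp
  qed
  then have "H \<le> H / 2 + exp (- 2 * K * s0) * integral {0..T} w"
    unfolding H_def by (simp add: exp_minus field_simps)
  also have "\<dots> \<le> H / 2 + integral {0..T} w"
    using s0(1) K w w_int[of T] T by (intro add_left_mono mult_left_le_one_le integral_nonneg) auto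
  finally have "H \<le> 2 * integral {0..T} w" by simp
  then have "H * exp (2 * K * r) \<le> 2 * integral {0..T} w * exp (2 * K * T)"
    using \<open>0 \<le> H\<close> r K by (intro mult_mono) auto
  with Y_le[OF r] show ?thesis
    by (simp add: mult_ac)
qed

lemma indefinite_integral_shift:
  fixes f g w Y :: "real \<Rightarrow> real"
  assumes Y: "\<And>s. 0 \<le> s \<Longrightarrow> (f has_integral Y s) {0..s}"
    and "0 \<le> lo" "lo \<le> s"
    and w: "continuous_on {lo..s} w"
    and fg: "\<And>r. r \<in> {lo..s} \<Longrightarrow> f r = g r - c * w r"
  shows "Y s + c * integral {lo..s} w = Y lo + integral {lo..s} g"
proof -
  have f: "f integrable_on {0..s}"
    using Y[of s] assms(2,3) by auto
  have f_lo_s: "f integrable_on {lo..s}"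
    using assms(2) by (intro integrable_on_subinterval[OF f]) auto
  have w_int: "w integrable_on {lo..s}"
    using w by (rule integrable_continuous_interval)
  have "(\<lambda>r. f r + c * w r) integrable_on {lo..s}"
    by (rule integrable_add[OF f_lo_s integrable_on_mult_right[OF w_int]])
  then have g_int: "g integrable_on {lo..s}"
    by (rule integrable_spike_finite[of "{}", rotated 2]) (auto simp: fg)
  have "integral {0..lo} f + integral {lo..s} f = integral {0..s} f"
    using assms(2,3) by (intro Henstock_Kurzweil_Integration.integral_combine f) auto
  moreover have "integral {0..lo} f = Y lo" "integral {0..s} f = Y s"
    using Y[of lo] Y[of s] assms(2,3) by (simp_all add: integral_unique)
  moreover have "integral {lo..s} f = integral {lo..s} (\<lambda>r. g r - c * w r)"
    by (rule integral_cong) (rule fg)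
  moreover have "\<dots> = integral {lo..s} g - c * integral {lo..s} w"
    using integral_diff[OF g_int integrable_on_mult_right[OF w_int, of c]] by simp
  ultimately show ?thesis by simp
qed

lemma tendsto_integral_at_dominated:
  fixes q :: "real \<Rightarrow> 'b \<Rightarrow> real" and f w :: "'b \<Rightarrow> real"
  assumes "\<And>s. q s \<in> borel_measurable M" and "f \<in> borel_measurable M"
    and "integrable M w"
    and "\<And>s \<omega>. \<omega> \<in> space M \<Longrightarrow> \<bar>q s \<omega>\<bar> \<le> w \<omega>"
    and "\<And>\<omega>. \<omega> \<in> space M \<Longrightarrow> ((\<lambda>s. q s \<omega>) \<longlongrightarrow> f \<omega>) (at t)"
  shows "((\<lambda>s. \<integral>\<omega>. q s \<omega> \<partial>M) \<longlongrightarrow> (\<integral>\<omega>. f \<omega> \<partial>M)) (at t)"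
  unfolding tendsto_at_iff_sequentially o_def
proof (intro allI impI)
  fix S :: "nat \<Rightarrow> real" assume S: "\<forall>i. S i \<in> UNIV - {t}" "S \<longlonglongrightarrow> t"
  show "(\<lambda>i. \<integral>\<omega>. q (S i) \<omega> \<partial>M) \<longlonglongrightarrow> (\<integral>\<omega>. f \<omega> \<partial>M)"
  proof (rule integral_dominated_convergence[OF assms(2) _ assms(3)])
    show "AE \<omega> in M. (\<lambda>i. q (S i) \<omega>) \<longlonglongrightarrow> f \<omega>"
      using assms(5) S by (auto simp: tendsto_at_iff_sequentially o_def)
  qed (use assms(1,4) in auto)
qed

lemma abs_integral_difference_quotient_le:
  fixes g :: "real \<Rightarrow> real"
  assumes "continuous_on {lo..hi} g" and "\<And>r. r \<in> {lo..hi} \<Longrightarrow> \<bar>g r\<bar> \<le> B"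
    and "s \<in> {lo..hi}" "t \<in> {lo..hi}" "s \<noteq> t"
  shows "\<bar>(integral {lo..s} g - integral {lo..t} g) / (s - t)\<bar> \<le> B"
proof -
  have g: "g integrable_on {u..v}" if "lo \<le> u" "v \<le> hi" for u v
    using that by (intro integrable_continuous_interval continuous_on_subset[OF assms(1)]) auto
  have piece: "\<bar>integral {u..v} g\<bar> \<le> B * (v - u)" if "lo \<le> u" "u \<le> v" "v \<le> hi" for u v
    using integral_norm_bound_integral[OF g[of u v], of "\<lambda>_. B"] assms(2) that
    by (auto simp: mult.commute)
  have "integral {lo..min s t} g + integral {min s t..max s t} g = integral {lo..max s t} g"
    using assms(3,4) by (intro Henstock_Kurzweil_Integration.integral_combine g) auto
  moreover have "\<bar>integral {min s t..max s t} g\<bar> \<le> B * \<bar>s - t\<bar>"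
    using piece[of "min s t" "max s t"] assms(3,4) by (auto simp: min_def max_def abs_if)
  ultimately show ?thesis
    using assms(5) by (cases "s < t") (auto simp: divide_le_eq min_def max_def abs_minus_commute)
qed

lemma has_real_derivative_integral_at:
  fixes g :: "real \<Rightarrow> real"
  assumes "continuous_on {lo..hi} g" and "lo < t" "t < hi"
  shows "((\<lambda>u. integral {lo..u} g) has_real_derivative g t) (at t)"
proof -
  have "((\<lambda>u. integral {lo..u} g) has_vector_derivative g t) (at t within {lo..hi})"
    using assms by (intro integral_has_vector_derivative integrable_continuous_interval) auto
  then show ?thesis
    using assms(2,3) by (simp add: at_within_Icc_at has_real_derivative_iff_has_vector_derivative)
qed

text \<open>By the mean value bound, the difference quotients of \<open>Z\<close> are dominated by \<open>G\<close>.\<close>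
lemma has_real_derivative_expectation_integral:
  fixes Z g :: "'b \<Rightarrow> real \<Rightarrow> real" and G :: "'b \<Rightarrow> real"
  assumes t: "lo < t" "t < hi"
    and Z: "\<And>\<omega> s. \<omega> \<in> space M \<Longrightarrow> s \<in> {lo..hi} \<Longrightarrow> Z \<omega> s = Z \<omega> lo + integral {lo..s} (g \<omega>)"
    and Z_int: "\<And>s. s \<in> {lo..hi} \<Longrightarrow> integrable M (\<lambda>\<omega>. Z \<omega> s)"
    and g_cont: "\<And>\<omega>. \<omega> \<in> space M \<Longrightarrow> continuous_on {lo..hi} (g \<omega>)"
    and g_meas: "(\<lambda>\<omega>. g \<omega> t) \<in> borel_measurable M"
    and G: "integrable M G" "\<And>\<omega> r. \<omega> \<in> space M \<Longrightarrow> r \<in> {lo..hi} \<Longrightarrow> \<bar>g \<omega> r\<bar> \<le> G \<omega>"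
  shows "((\<lambda>s. \<integral>\<omega>. Z \<omega> s \<partial>M) has_real_derivative (\<integral>\<omega>. g \<omega> t \<partial>M)) (at t)"
proof -
  have tI: "t \<in> {lo..hi}" using t by simp
  define q where "q s \<omega> = (if s \<in> {lo..hi} \<and> s \<noteq> t then (Z \<omega> s - Z \<omega> t) / (s - t) else g \<omega> t)"
    for s \<omega>
  have q_eq: "q s \<omega> = (integral {lo..s} (g \<omega>) - integral {lo..t} (g \<omega>)) / (s - t)"
    if "\<omega> \<in> space M" "s \<in> {lo..hi}" "s \<noteq> t" for s \<omega>
    unfolding q_def using that Z[OF that(1,2)] Z[OF that(1) tI] by simp
  have near: "\<forall>\<^sub>F s in at t. s \<in> {lo..hi} \<and> s \<noteq> t"
  proof -
    have "\<forall>\<^sub>F s in at t. s \<in> {lo<..<hi}"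
      using t by (intro eventually_at_in_open') auto
    moreover have "\<forall>\<^sub>F s in at t. s \<noteq> t"
      by (rule eventually_neq_at_within)
    ultimately show ?thesis
      by eventually_elim auto
  qed
  have lim: "((\<lambda>s. \<integral>\<omega>. q s \<omega> \<partial>M) \<longlongrightarrow> (\<integral>\<omega>. g \<omega> t \<partial>M)) (at t)"
  proof (rule tendsto_integral_at_dominated[OF _ g_meas G(1)])
    show "q s \<in> borel_measurable M" for s
    proof (cases "s \<in> {lo..hi} \<and> s \<noteq> t")
      case True
      then have "q s = (\<lambda>\<omega>. (Z \<omega> s - Z \<omega> t) / (s - t))"
        unfolding q_def by auto
      then show ?thesis
        using borel_measurable_integrable[OF Z_int] True tI by simp
    next
      case False
      then have "q s = (\<lambda>\<omega>. g \<omega> t)"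
        unfolding q_def by auto
      then show ?thesis using g_meas by simp
    qed
    show "\<bar>q s \<omega>\<bar> \<le> G \<omega>" if \<omega>: "\<omega> \<in> space M" for s \<omega>
    proof (cases "s \<in> {lo..hi} \<and> s \<noteq> t")
      case True
      then show ?thesis
        unfolding q_eq[OF \<omega> conjunct1[OF True] conjunct2[OF True]]
        using abs_integral_difference_quotient_le[OF g_cont[OF \<omega>] G(2)[OF \<omega>], of s t] tI
        by blast
    next
      case False
      then have "q s \<omega> = g \<omega> t"
        unfolding q_def by (simp only: if_False)
      then show ?thesis
        using G(2)[OF \<omega> tI] by simp
    qed
    show "((\<lambda>s. q s \<omega>) \<longlongrightarrow> g \<omega> t) (at t)" if \<omega>: "\<omega> \<in> space M" for \<omega>
      using has_real_derivative_integral_at[OF g_cont[OF \<omega>] t]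
      unfolding has_field_derivative_iff
    proof (rule Lim_transform_eventually)
      show "\<forall>\<^sub>F s in at t. (integral {lo..s} (g \<omega>) - integral {lo..t} (g \<omega>)) / (s - t) = q s \<omega>"
        using near by eventually_elim (use q_eq[OF \<omega>] in auto)
    qed
  qed
  have E_q: "(\<integral>\<omega>. q s \<omega> \<partial>M) = ((\<integral>\<omega>. Z \<omega> s \<partial>M) - (\<integral>\<omega>. Z \<omega> t \<partial>M)) / (s - t)"
    if "s \<in> {lo..hi}" "s \<noteq> t" for s
    unfolding q_def using that Z_int[OF that(1)] Z_int[OF tI] by simp
  show ?thesis
    unfolding has_field_derivative_iff
  proof (rule Lim_transform_eventually[OF lim])
    show "\<forall>\<^sub>F s in at t. (\<integral>\<omega>. q s \<omega> \<partial>M) = ((\<integral>\<omega>. Z \<omega> s \<partial>M) - (\<integral>\<omega>. Z \<omega> t \<partial>M)) / (s - t)"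
      using near by eventually_elim (use E_q in auto)
  qed
qed

lemma (in finite_measure) null_sets_eventually_in:
  assumes "(\<lambda>m. measure M (E m)) \<longlonglongrightarrow> 0" and "\<And>m. E m \<in> sets M"
  shows "(\<Union>N. \<Inter>m\<in>{N..}. E m) \<in> null_sets M"
proof (intro null_sets_UN)
  fix N
  have "measure M (\<Inter>m\<in>{N..}. E m) \<le> 0"
  proof (rule LIMSEQ_le_const[OF assms(1)], intro exI allI impI)
    fix m assume "N \<le> m"
    then show "measure M (\<Inter>m\<in>{N..}. E m) \<le> measure M (E m)"
      using assms(2) by (intro finite_measure_mono) auto
  qed
  then have "measure M (\<Inter>m\<in>{N..}. E m) = 0"
    using measure_nonneg[of M "\<Inter>m\<in>{N..}. E m"] by linarith
  then show "(\<Inter>m\<in>{N..}. E m) \<in> null_sets M"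
    using assms(2) by (auto simp: emeasure_eq_measure null_sets_def)
qed

section \<open>Brownian motion\<close>

lemma brownian_zero:
  assumes "brownian P W" and "\<omega> \<in> space P"
  shows "W \<omega> 0 = 0"
  using assms unfolding brownian_def by blast

lemma brownian_continuous:
  assumes "brownian P W" and "\<omega> \<in> space P"
  shows "continuous_on {0..} (W \<omega>)"
  using assms unfolding brownian_def by blast

lemma brownian_increment_distributed:
  assumes "brownian P W" and "0 \<le> s" and "s < r"
  shows "distributed P lborel (\<lambda>\<omega>. W \<omega> r - W \<omega> s) (normal_density 0 (sqrt (r - s)))"
proof -
  let ?t = "\<lambda>k::nat. if k = 0 then s else r"
  have "\<forall>n (t::nat \<Rightarrow> real). 0 \<le> t 0 \<longrightarrow> (\<forall>k<n. t k < t (Suc k)) \<longrightarrow>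
      (\<forall>k<n. distributed P lborel (\<lambda>\<omega>. W \<omega> (t (Suc k)) - W \<omega> (t k))
                (normal_density 0 (sqrt (t (Suc k) - t k))))"
    using assms(1) unfolding brownian_def by blast
  from spec[OF spec[OF this, of 1], of ?t] assms(2,3) show ?thesis by simp
qed

text \<open>\<open>E \<bar>W r\<bar> = sqrt (2 r / pi)\<close>; the cruder \<open>1 + r\<close> is what the dominations below need.\<close>
lemma brownian_moments:
  assumes "brownian P W" and "0 \<le> r"
  shows "integrable P (\<lambda>\<omega>. W \<omega> r)" "(\<integral>\<omega>. W \<omega> r \<partial>P) = 0"
    "integrable P (\<lambda>\<omega>. \<bar>W \<omega> r\<bar>)" "(\<integral>\<omega>. \<bar>W \<omega> r\<bar> \<partial>P) \<le> 1 + r"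
proof -
  have "integrable P (\<lambda>\<omega>. W \<omega> r) \<and> (\<integral>\<omega>. W \<omega> r \<partial>P) = 0 \<and>
    integrable P (\<lambda>\<omega>. \<bar>W \<omega> r\<bar>) \<and> (\<integral>\<omega>. \<bar>W \<omega> r\<bar> \<partial>P) \<le> 1 + r"
  proof (cases "r = 0")
    case True
    then have "\<And>\<omega>. \<omega> \<in> space P \<Longrightarrow> W \<omega> r = 0"
      using brownian_zero[OF assms(1)] by simp
    then show ?thesis
      using assms(2) by (simp cong: Bochner_Integration.integrable_cong Bochner_Integration.integral_cong)
  next
    case False
    with assms(2) have r: "0 < r" by simp
    note D = brownian_increment_distributed[OF assms(1) order.refl r, simplified]
    have "sqrt r * sqrt (2 / pi) \<le> sqrt r"
      using pi_gt3 r by (intro mult_left_le) auto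
    also have "\<dots> \<le> sqrt ((1 + r)\<^sup>2)"
      using r by (intro real_sqrt_le_mono) (simp add: power2_eq_square algebra_simps)
    finally have "sqrt r * sqrt (2 / pi) \<le> 1 + r"
      using r by simp
    moreover have "integrable P (\<lambda>\<omega>. W \<omega> r - W \<omega> 0)"
      using distributed_integrable[OF D, of "\<lambda>x. x"] integrable_normal_moment_nz_1[of "sqrt r" 0] r
      by simp
    moreover have "(\<integral>\<omega>. W \<omega> r - W \<omega> 0 \<partial>P) = 0"
      using distributed_integral[OF D, of "\<lambda>x. x"] integral_normal_moment_nz_1[of "sqrt r" 0] r
      by simp
    moreover have "integrable P (\<lambda>\<omega>. \<bar>W \<omega> r - W \<omega> 0\<bar>)"
      using distributed_integrable[OF D, of abs] integrable_normal_moment_abs[of "sqrt r" 0 1] r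
      by simp
    moreover have "(\<integral>\<omega>. \<bar>W \<omega> r - W \<omega> 0\<bar> \<partial>P) = sqrt r * sqrt (2 / pi)"
      using distributed_integral[OF D, of abs] integral_normal_moment_abs_odd[of "sqrt r" 0 0] r
      by simp
    moreover have "integrable P (\<lambda>\<omega>. W \<omega> r) = integrable P (\<lambda>\<omega>. W \<omega> r - W \<omega> 0)"
      "integrable P (\<lambda>\<omega>. \<bar>W \<omega> r\<bar>) = integrable P (\<lambda>\<omega>. \<bar>W \<omega> r - W \<omega> 0\<bar>)"
      "(\<integral>\<omega>. W \<omega> r \<partial>P) = (\<integral>\<omega>. W \<omega> r - W \<omega> 0 \<partial>P)"
      "(\<integral>\<omega>. \<bar>W \<omega> r\<bar> \<partial>P) = (\<integral>\<omega>. \<bar>W \<omega> r - W \<omega> 0\<bar> \<partial>P)"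
      by (simp_all add: brownian_zero[OF assms(1)] cong: Bochner_Integration.integrable_cong
          Bochner_Integration.integral_cong)
    ultimately show ?thesis
      by simp
  qed
  then show "integrable P (\<lambda>\<omega>. W \<omega> r)" "(\<integral>\<omega>. W \<omega> r \<partial>P) = 0"
    "integrable P (\<lambda>\<omega>. \<bar>W \<omega> r\<bar>)" "(\<integral>\<omega>. \<bar>W \<omega> r\<bar> \<partial>P) \<le> 1 + r" by blast+
qed

lemma (in prob_space) brownian_integrable_continuous_process:
  assumes "brownian M W" and "0 \<le> lo"
  shows "integrable_continuous_process M W lo hi (1 + hi)"
    and "integrable_continuous_process M (\<lambda>\<omega> r. \<bar>W \<omega> r\<bar>) lo hi (1 + hi)"
proof -
  have "(\<integral>\<omega>. \<bar>W \<omega> r\<bar> \<partial>M) \<le> 1 + hi" if "r \<in> {lo..hi}" for r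
    using brownian_moments(4)[OF assms(1), of r] that assms(2) by auto
  with assms brownian_moments[OF assms(1)] show
    "integrable_continuous_process M W lo hi (1 + hi)"
    "integrable_continuous_process M (\<lambda>\<omega> r. \<bar>W \<omega> r\<bar>) lo hi (1 + hi)"
    by (unfold_locales; force intro: borel_measurable_integrable continuous_on_rabs
        brownian_continuous)+
qed

section \<open>The generator of the motor process\<close>

lemma occ_le: "occ M s \<le> M"
proof -
  have "occ M s \<le> card {1..M}" unfolding occ_def by (intro card_mono) auto
  then show ?thesis by simp
qed

lemma finite_nbr: "finite (nbr M s)"
  unfolding nbr_def by simp

lemma self_in_nbr: "s \<in> nbr M s"
  unfolding nbr_def by simp

locale motor_rates =
  fixes M :: nat and lon loff lstep :: "nat \<Rightarrow> real"
  assumes rates_nonneg: "\<And>m. m \<le> M \<Longrightarrow> 0 \<le> lon m \<and> 0 \<le> loff m \<and> 0 \<le> lstep m"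
begin

abbreviation "jump_rate \<equiv> jrate M lon loff lstep"
abbreviation "out_rate \<equiv> exit_rate M lon loff lstep"
abbreviation "Q \<equiv> Qgen M lon loff lstep"
abbreviation "Q_pow \<equiv> Qpow M lon loff lstep"
abbreviation "P_trans \<equiv> transP M lon loff lstep"

definition rate_bound :: real where
  "rate_bound = real M * (\<Sum>m\<le>M. lon m + lstep m + loff m)"

lemma rates_occ_nonneg: "0 \<le> lon (occ M s)" "0 \<le> loff (occ M s)" "0 \<le> lstep (occ M s)"
  using rates_nonneg[OF occ_le] by auto

lemma occ_rates_le: "lon (occ M s) + lstep (occ M s) + loff (occ M s) \<le> (\<Sum>m\<le>M. lon m + lstep m + loff m)"
proof -
  have "(\<Sum>m\<in>{occ M s}. lon m + lstep m + loff m) \<le> (\<Sum>m\<le>M. lon m + lstep m + loff m)"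
    using occ_le[of M s] rates_nonneg by (intro sum_mono2) (auto intro: add_nonneg_nonneg)
  then show ?thesis by simp
qed

lemma exit_rate_nonneg: "out_rate s \<ge> 0"
  unfolding exit_rate_def using rates_occ_nonneg[of s]
  by (intro sum_nonneg) (auto split: option.split)

lemma exit_rate_le: "out_rate s \<le> rate_bound"
proof -
  have "out_rate s \<le> (\<Sum>i\<in>{1..M}. (\<Sum>m\<le>M. lon m + lstep m + loff m))"
    unfolding exit_rate_def using occ_rates_le[of s] rates_occ_nonneg[of s]
    by (intro sum_mono) (auto split: option.split)
  then show ?thesis by (simp add: rate_bound_def)
qed

lemma jump_rate_nonneg: "jump_rate s s2 \<ge> 0"
  unfolding jrate_def using rates_occ_nonneg[of s]
  by (intro sum_nonneg) (auto split: option.split)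

lemma jump_rate_self: "jump_rate s s = 0"
  unfolding jrate_def
proof (intro sum.neutral ballI)
  fix i
  have "s \<noteq> s(i := Some 0)" if "s i = None"
    using that by (metis fun_upd_same option.distinct(1))
  moreover have "s \<noteq> s(i := Some (Suc j))" "s \<noteq> s(i := None)" if "s i = Some j" for j
    using that by (metis fun_upd_same n_not_Suc_n option.inject, metis fun_upd_same option.distinct(1))
  ultimately show "(case s i of None \<Rightarrow> (if s = s(i := Some 0) then lon (occ M s) else 0)
      | Some j \<Rightarrow> (if s = s(i := Some (Suc j)) then lstep (occ M s) else 0)
                 + (if s = s(i := None) then loff (occ M s) else 0)) = 0"
    by (auto split: option.split)
qed

lemma sum_nbr_jump_rate: "(\<Sum>r\<in>nbr M s. jump_rate s r) = out_rate s"
proof -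
  have "(\<Sum>r\<in>nbr M s. jump_rate s r)
     = (\<Sum>i\<in>{1..M}. \<Sum>r\<in>nbr M s. (case s i of
        None \<Rightarrow> (if r = s(i := Some 0) then lon (occ M s) else 0)
      | Some j \<Rightarrow> (if r = s(i := Some (Suc j)) then lstep (occ M s) else 0)
                 + (if r = s(i := None) then loff (occ M s) else 0)))"
    unfolding jrate_def by (rule sum.swap)
  also have "\<dots> = (\<Sum>i\<in>{1..M}. (case s i of None \<Rightarrow> lon (occ M s) | Some j \<Rightarrow> lstep (occ M s) + loff (occ M s)))"
  proof (intro sum.cong refl)
    fix i assume i: "i \<in> {1..M}"
    show "(\<Sum>r\<in>nbr M s. (case s i of
        None \<Rightarrow> (if r = s(i := Some 0) then lon (occ M s) else 0)
      | Some j \<Rightarrow> (if r = s(i := Some (Suc j)) then lstep (occ M s) else 0)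
                 + (if r = s(i := None) then loff (occ M s) else 0)))
      = (case s i of None \<Rightarrow> lon (occ M s) | Some j \<Rightarrow> lstep (occ M s) + loff (occ M s))"
    proof (cases "s i")
      case None
      have "s(i := Some 0) \<in> nbr M s" using i unfolding nbr_def by auto
      then show ?thesis using None finite_nbr[of M s] by (simp add: sum.delta')
    next
      case (Some j)
      have m1: "s(i := Some (Suc j)) \<in> nbr M s" using i Some unfolding nbr_def
        by (intro insertI2 UnI2) (rule image_eqI[where x=i], auto)
      have m2: "s(i := None) \<in> nbr M s" using i unfolding nbr_def by auto
      show ?thesis using Some m1 m2 finite_nbr[of M s] by (simp add: sum.distrib sum.delta')
    qed
  qed
  finally show ?thesis unfolding exit_rate_def .
qed

lemma sum_nbr_Q: "(\<Sum>r\<in>nbr M s. Q s r) = 0"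
  unfolding Qgen_def using sum_nbr_jump_rate[of s] self_in_nbr[of s M] finite_nbr[of M s]
  by (simp add: sum_subtractf sum.delta')

lemma sum_nbr_abs_Q_le: "(\<Sum>r\<in>nbr M s. \<bar>Q s r\<bar>) \<le> 2 * rate_bound"
proof -
  have "(\<Sum>r\<in>nbr M s. \<bar>Q s r\<bar>)
     \<le> (\<Sum>r\<in>nbr M s. jump_rate s r + (if r = s then out_rate s else 0))"
    unfolding Qgen_def using jump_rate_nonneg exit_rate_nonneg by (intro sum_mono) (auto simp: abs_if jump_rate_self)
  also have "\<dots> = 2 * out_rate s"
    using sum_nbr_jump_rate[of s] self_in_nbr[of s M] finite_nbr[of M s] by (simp add: sum.distrib sum.delta')
  also have "\<dots> \<le> 2 * rate_bound" using exit_rate_le[of s] by simp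
  finally show ?thesis .
qed

lemma rate_bound_nonneg: "rate_bound \<ge> 0" using exit_rate_le[of s] exit_rate_nonneg[of s] by linarith

fun reach :: "nat \<Rightarrow> mstate \<Rightarrow> mstate set" where
  "reach 0 s = {s}"
| "reach (Suc n) s = (\<Union>r\<in>nbr M s. reach n r)"

lemma finite_reach: "finite (reach n s)"
  by (induction n arbitrary: s) (auto simp: finite_nbr)

lemma sum_Q_pow:
  assumes "finite F" "reach n s \<subseteq> F"
  shows "(\<Sum>s2\<in>F. Q_pow n s s2) = (if n = 0 then 1 else 0)"
  using assms(2)
proof (induction n arbitrary: s)
  case 0
  then show ?case using assms(1) by (simp add: sum.delta)
next
  case (Suc n)
  have "(\<Sum>s2\<in>F. Q_pow (Suc n) s s2)
      = (\<Sum>r\<in>nbr M s. Q s r * (\<Sum>s2\<in>F. Q_pow n r s2))"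
    by (simp add: sum.swap[of _ F] sum_distrib_left)
  also have "\<dots> = (\<Sum>r\<in>nbr M s. Q s r * (if n = 0 then 1 else 0))"
  proof (intro sum.cong refl)
    fix r assume "r \<in> nbr M s"
    then have "reach n r \<subseteq> F" using Suc.prems by auto
    then show "Q s r * (\<Sum>s2\<in>F. Q_pow n r s2) = Q s r * (if n = 0 then 1 else 0)"
      using Suc.IH by simp
  qed
  also have "\<dots> = 0" using sum_nbr_Q[of s] by (simp add: sum_distrib_right[symmetric])
  finally show ?case by simp
qed

lemma sum_abs_Q_pow_le:
  assumes "finite F"
  shows "(\<Sum>s2\<in>F. \<bar>Q_pow n s s2\<bar>) \<le> (2 * rate_bound) ^ n"
proof (induction n arbitrary: s)
  case 0
  have "(\<Sum>s2\<in>F. \<bar>Q_pow 0 s s2\<bar>) = (\<Sum>s2\<in>F. if s = s2 then 1 else 0)"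
    by (intro sum.cong) auto
  also have "\<dots> \<le> 1" using assms by (simp add: sum.delta)
  finally show ?case by simp
next
  case (Suc n)
  have "(\<Sum>s2\<in>F. \<bar>Q_pow (Suc n) s s2\<bar>)
      \<le> (\<Sum>s2\<in>F. \<Sum>r\<in>nbr M s. \<bar>Q s r\<bar> * \<bar>Q_pow n r s2\<bar>)"
    by (auto intro!: sum_mono order.trans[OF sum_abs] simp: abs_mult)
  also have "\<dots> = (\<Sum>r\<in>nbr M s. \<bar>Q s r\<bar> * (\<Sum>s2\<in>F. \<bar>Q_pow n r s2\<bar>))"
    by (simp add: sum.swap[of _ F] sum_distrib_left)
  also have "\<dots> \<le> (\<Sum>r\<in>nbr M s. \<bar>Q s r\<bar> * (2 * rate_bound) ^ n)"
    using Suc by (intro sum_mono mult_left_mono) auto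
  also have "\<dots> \<le> 2 * rate_bound * (2 * rate_bound) ^ n"
    using sum_nbr_abs_Q_le[of s] rate_bound_nonneg by (simp add: sum_distrib_right[symmetric] mult_right_mono)
  finally show ?case by simp
qed

lemma abs_Q_pow_le: "\<bar>Q_pow n s s2\<bar> \<le> (2 * rate_bound) ^ n"
  using sum_abs_Q_pow_le[of "{s2}" n s] by simp

lemma exp_series_sums: "(\<lambda>n. (2 * rate_bound * \<tau>) ^ n / fact n) sums exp (2 * rate_bound * \<tau>)"
  using exp_converges[of "2 * rate_bound * \<tau>"] by (simp add: divide_inverse mult.commute)

lemma abs_series_term_le:
  assumes "\<tau> \<ge> 0" and that: "\<bar>c\<bar> \<le> (2 * rate_bound) ^ n"
  shows "\<bar>\<tau> ^ n / fact n * c\<bar> \<le> (2 * rate_bound * \<tau>) ^ n / fact n"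
proof -
  have "\<bar>\<tau> ^ n / fact n * c\<bar> = \<tau> ^ n / fact n * \<bar>c\<bar>" using assms by (simp add: abs_mult)
  also have "\<dots> \<le> \<tau> ^ n / fact n * (2 * rate_bound) ^ n" using that assms by (intro mult_left_mono) auto
  also have "\<dots> = (2 * rate_bound * \<tau>) ^ n / fact n" by (simp add: power_mult_distrib)
  finally show ?thesis .
qed

lemma summable_P_trans_series:
  assumes "\<tau> \<ge> 0"
  shows "summable (\<lambda>n. \<tau> ^ n / fact n * Q_pow n s s2)"
proof (rule summable_comparison_test[OF _ sums_summable[OF exp_series_sums]])
  show "\<exists>N. \<forall>n\<ge>N. norm (\<tau> ^ n / fact n * Q_pow n s s2) \<le> (2 * rate_bound * \<tau>) ^ n / fact n"
    using abs_series_term_le[OF assms abs_Q_pow_le] by auto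
qed

lemma P_trans_diag_ge:
  assumes "\<tau> \<ge> 0"
  shows "P_trans \<tau> s s \<ge> 2 - exp (2 * rate_bound * \<tau>)"
proof -
  let ?a = "\<lambda>n. \<tau> ^ n / fact n * Q_pow n s s"
  let ?b = "\<lambda>n. (2 * rate_bound * \<tau>) ^ n / fact n"
  have sa: "summable ?a" by (rule summable_P_trans_series[OF assms])
  have sb: "summable ?b" using exp_series_sums by (rule sums_summable)
  have ab: "\<bar>?a n\<bar> \<le> ?b n" for n by (rule abs_series_term_le[OF assms abs_Q_pow_le])
  have "(\<Sum>n. ?a (Suc n)) = suminf ?a - ?a 0" by (rule suminf_split_head[OF sa])
  then have eq: "suminf ?a = 1 + (\<Sum>n. ?a (Suc n))" by simp
  have "\<bar>\<Sum>n. ?a (Suc n)\<bar> \<le> (\<Sum>n. ?b (Suc n))"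
    unfolding real_norm_def[symmetric]
  proof (rule norm_suminf_le)
    show "norm (?a (Suc n)) \<le> ?b (Suc n)" for n
      unfolding real_norm_def by (rule ab)
    show "summable (\<lambda>n. ?b (Suc n))"
      by (rule summable_Suc_iff[THEN iffD2, OF sb])
  qed
  also have "\<dots> = exp (2 * rate_bound * \<tau>) - 1"
    using suminf_split_head[OF sb] sums_unique[OF exp_series_sums] by simp
  finally show ?thesis unfolding transP_def eq by linarith
qed

lemma P_trans_tight:
  assumes "\<tau> \<ge> 0" "\<eta> > 0"
  shows "\<exists>F. finite F \<and> (\<Sum>s\<in>F. P_trans \<tau> s0 s) \<ge> 1 - \<eta>"
proof -
  let ?b = "\<lambda>n. (2 * rate_bound * \<tau>) ^ n / fact n"
  have sb: "summable ?b" using exp_series_sums by (rule sums_summable)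
  obtain N where N: "\<And>n. n \<ge> N \<Longrightarrow> norm (\<Sum>i. ?b (i + n)) < \<eta>"
    using suminf_exist_split[OF assms(2) sb] by blast
  define F where "F = (\<Union>k\<le>N. reach k s0)"
  have fF: "finite F" unfolding F_def by (auto simp: finite_reach)
  let ?c = "\<lambda>n. \<tau> ^ n / fact n * (\<Sum>s\<in>F. Q_pow n s0 s)"
  have sc: "summable ?c"
    unfolding sum_distrib_left by (intro summable_sum summable_P_trans_series assms(1))
  have cb: "\<bar>?c n\<bar> \<le> ?b n" for n
  proof (rule abs_series_term_le[OF assms(1)])
    have "\<bar>\<Sum>s\<in>F. Q_pow n s0 s\<bar> \<le> (\<Sum>s\<in>F. \<bar>Q_pow n s0 s\<bar>)"
      by (rule sum_abs)
    also have "\<dots> \<le> (2 * rate_bound) ^ n" by (rule sum_abs_Q_pow_le[OF fF])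
    finally show "\<bar>\<Sum>s\<in>F. Q_pow n s0 s\<bar> \<le> (2 * rate_bound) ^ n" .
  qed
  have "(\<Sum>s\<in>F. P_trans \<tau> s0 s) = (\<Sum>s\<in>F. \<Sum>n. \<tau> ^ n / fact n * Q_pow n s0 s)"
    unfolding transP_def ..
  also have "\<dots> = (\<Sum>n. \<Sum>s\<in>F. \<tau> ^ n / fact n * Q_pow n s0 s)"
    by (rule suminf_sum[symmetric]) (rule summable_P_trans_series[OF assms(1)])
  also have "\<dots> = suminf ?c" by (simp add: sum_distrib_left)
  also have "\<dots> = (\<Sum>i. ?c (i + Suc N)) + (\<Sum>i<Suc N. ?c i)"
    by (rule suminf_split_initial_segment[OF sc])
  also have "(\<Sum>i<Suc N. ?c i) = (\<Sum>i<Suc N. \<tau> ^ i / fact i * (if i = 0 then 1 else 0))"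
  proof (intro sum.cong refl)
    fix i assume "i \<in> {..<Suc N}"
    then have "i \<le> N" by simp
    then have "reach i s0 \<subseteq> F" unfolding F_def by blast
    then show "?c i = \<tau> ^ i / fact i * (if i = 0 then 1 else 0)" by (simp add: sum_Q_pow[OF fF])
  qed
  also have "\<dots> = (\<Sum>i<Suc N. if i = 0 then 1 else 0)" by (intro sum.cong) auto
  also have "\<dots> = 1" by simp
  finally have eq: "(\<Sum>s\<in>F. P_trans \<tau> s0 s) = (\<Sum>i. ?c (i + Suc N)) + 1" .
  have "\<bar>\<Sum>i. ?c (i + Suc N)\<bar> \<le> (\<Sum>i. ?b (i + Suc N))"
    unfolding real_norm_def[symmetric]
  proof (rule norm_suminf_le)
    show "norm (?c (i + Suc N)) \<le> ?b (i + Suc N)" for i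
      unfolding real_norm_def by (rule cb)
    show "summable (\<lambda>i. ?b (i + Suc N))"
      by (rule summable_ignore_initial_segment[OF sb])
  qed
  also have "\<dots> < \<eta>" using N[of "Suc N"] by simp
  finally have "\<bar>\<Sum>i. ?c (i + Suc N)\<bar> < \<eta>" .
  then show ?thesis using eq fF by (intro exI[of _ F]) auto
qed

end

section \<open>Paths of the motor process\<close>

definition step_path :: "(real \<Rightarrow> 'a) \<Rightarrow> bool" where
  "step_path j \<longleftrightarrow> (\<forall>t\<ge>0. \<exists>d>0. \<forall>s. t \<le> s \<and> s < t + d \<longrightarrow> j s = j t)
      \<and> (\<forall>t>0. \<exists>d>0. \<forall>s. t - d < s \<and> s < t \<longrightarrow> j s = j (t - d / 2))"

lemma motor_process_path:
  assumes "motor_process M lon loff lstep P J" and "\<omega> \<in> space P"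
  shows "J \<omega> 0 = (\<lambda>_. None)" and "step_path (J \<omega>)"
  using assms unfolding motor_process_def step_path_def by blast+

lemma step_path_left_values_differ_at_jump:
  fixes j :: "real \<Rightarrow> 'a"
  assumes "step_path j" and "0 < t"
    and jump: "\<not> (\<exists>d>0. \<forall>r. t - d < r \<and> r < t + d \<longrightarrow> j r = j t)"
  obtains d where "0 < d" "\<And>h. 0 < h \<Longrightarrow> h < d \<Longrightarrow> j (t - h) \<noteq> j t"
proof -
  obtain d1 where d1: "d1 > 0" "\<forall>s. t \<le> s \<and> s < t + d1 \<longrightarrow> j s = j t"
    using assms(1,2) unfolding step_path_def by (meson less_imp_le)
  obtain d2 where d2: "d2 > 0" "\<forall>s. t - d2 < s \<and> s < t \<longrightarrow> j s = j (t - d2 / 2)"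
    using assms(1,2) unfolding step_path_def by meson
  have "j (t - d2 / 2) \<noteq> j t"
  proof
    assume same: "j (t - d2 / 2) = j t"
    have "\<forall>r. t - min d1 d2 < r \<and> r < t + min d1 d2 \<longrightarrow> j r = j t"
    proof (intro allI impI)
    fix r assume "t - min d1 d2 < r \<and> r < t + min d1 d2"
      then show "j r = j t"
        using d1(2)[rule_format, of r] d2(2)[rule_format, of r] same
        by (cases "r < t") auto
    qed
    with jump d1(1) d2(1) show False
      by (meson min_less_iff_conj)
  qed
  then have "j (t - h) \<noteq> j t" if "0 < h" "h < d2" for h
    using d2(2)[rule_format, of "t - h"] that by simp
  with d2(1) show ?thesis
    by (rule that)
qed

context motor_rates
begin

lemma motor_process_sets:
  assumes "motor_process M lon loff lstep P J"
  shows "{\<omega> \<in> space P. J \<omega> \<tau> = s} \<in> sets P"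
proof -
  have "(\<lambda>\<omega>. J \<omega> \<tau>) \<in> measurable P (count_space UNIV)"
    using assms unfolding motor_process_def by blast
  from measurable_sets[OF this, of "{s}"] show ?thesis
    by (simp add: vimage_def Int_def conj_commute)
qed

lemma motor_process_fdd:
  assumes "motor_process M lon loff lstep P J"
    and "t 0 = 0" "\<forall>k<n. t k < t (Suc k)" "st 0 = (\<lambda>_. None)"
  shows "measure P {\<omega> \<in> space P. \<forall>k\<in>{1..n}. J \<omega> (t k) = st k}
      = (\<Prod>k<n. P_trans (t (Suc k) - t k) (st k) (st (Suc k)))"
  using assms unfolding motor_process_def by blast

lemma motor_process_measure_two_times:
  assumes "motor_process M lon loff lstep P J" and "0 < \<tau>1" and "\<tau>1 < \<tau>2"
  shows "measure P {\<omega> \<in> space P. J \<omega> \<tau>1 = s \<and> J \<omega> \<tau>2 = s}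
      = P_trans \<tau>1 (\<lambda>_. None) s * P_trans (\<tau>2 - \<tau>1) s s"
proof -
  let ?t = "\<lambda>k::nat. if k = 0 then 0 else if k = 1 then \<tau>1 else \<tau>2"
  let ?s = "\<lambda>k::nat. if k = 0 then (\<lambda>_. None) else s"
  have "measure P {\<omega> \<in> space P. \<forall>k\<in>{1..2}. J \<omega> (?t k) = ?s k}
      = (\<Prod>k<2. P_trans (?t (Suc k) - ?t k) (?s k) (?s (Suc k)))"
    using assms by (intro motor_process_fdd) (auto simp: less_Suc_eq numeral_2_eq_2)
  moreover have "{1..2::nat} = {1, 2}" by auto
  ultimately show ?thesis
    by (simp add: numeral_2_eq_2 conj_commute)
qed

lemma motor_process_measure:
  assumes "motor_process M lon loff lstep P J" and "0 < \<tau>"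
  shows "measure P {\<omega> \<in> space P. J \<omega> \<tau> = s} = P_trans \<tau> (\<lambda>_. None) s"
proof -
  let ?t = "\<lambda>k::nat. if k = 0 then 0 else \<tau>"
  let ?s = "\<lambda>k::nat. if k = 0 then (\<lambda>_. None) else s"
  have "measure P {\<omega> \<in> space P. \<forall>k\<in>{1..1}. J \<omega> (?t k) = ?s k}
      = (\<Prod>k<1. P_trans (?t (Suc k) - ?t k) (?s k) (?s (Suc k)))"
    using assms by (intro motor_process_fdd) auto
  then show ?thesis by simp
qed

text \<open>The event that the state at time \<open>t - h\<close> differs from that at \<open>t\<close> need not be
  measurable (the state space is uncountable), so it is covered by a measurable event: the complement
  of "same state in \<open>F\<close> at both times", where \<open>F\<close> carries all but \<open>\<eta>\<close> of the mass at time
  \<open>t - h\<close>.\<close>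
lemma left_change_event:
  assumes "prob_space P" and J: "motor_process M lon loff lstep P J"
    and h: "0 < h" "h < t" and "0 < \<eta>"
  obtains E where "E \<in> sets P" "measure P E \<le> exp (2 * rate_bound * h) - 1 + \<eta>"
    "{\<omega> \<in> space P. J \<omega> (t - h) \<noteq> J \<omega> t} \<subseteq> E"
proof -
  interpret prob_space P by fact
  obtain F where F: "finite F" "1 - \<eta> \<le> (\<Sum>s\<in>F. P_trans (t - h) (\<lambda>_. None) s)"
    using P_trans_tight[of "t - h" \<eta>] h \<open>0 < \<eta>\<close> by auto
  define A where "A s = {\<omega> \<in> space P. J \<omega> (t - h) = s \<and> J \<omega> t = s}" for s
  have A: "A s \<in> sets P" for s
  proof -
    have "A s = {\<omega> \<in> space P. J \<omega> (t - h) = s} \<inter> {\<omega> \<in> space P. J \<omega> t = s}"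
      unfolding A_def by auto
    then show ?thesis using motor_process_sets[OF J] by auto
  qed
  have UA: "(\<Union>s\<in>F. A s) \<in> sets P"
    using A F(1) by auto
  define \<delta> where "\<delta> = exp (2 * rate_bound * h) - 1"
  have "\<delta> \<ge> 0" unfolding \<delta>_def using rate_bound_nonneg h by simp
  have "1 - \<delta> - \<eta> \<le> measure P (\<Union>s\<in>F. A s)"
  proof (cases "\<delta> \<le> 1")
    case True
    have "(1 - \<delta>) * (1 - \<eta>) \<le> (1 - \<delta>) * (\<Sum>s\<in>F. P_trans (t - h) (\<lambda>_. None) s)"
      using F(2) True by (intro mult_left_mono) auto
    also have "\<dots> \<le> (\<Sum>s\<in>F. P_trans (t - h) (\<lambda>_. None) s * P_trans h s s)"
      unfolding sum_distrib_left
    proof (intro sum_mono)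
      fix s
      have "0 \<le> P_trans (t - h) (\<lambda>_. None) s"
        using motor_process_measure[OF J, of "t - h" s] h
          measure_nonneg[of P "{\<omega> \<in> space P. J \<omega> (t - h) = s}"] by simp
      moreover have "1 - \<delta> \<le> P_trans h s s"
        using P_trans_diag_ge[of h s] h unfolding \<delta>_def by simp
      ultimately show "(1 - \<delta>) * P_trans (t - h) (\<lambda>_. None) s \<le> P_trans (t - h) (\<lambda>_. None) s * P_trans h s s"
        by (simp add: mult.commute mult_right_mono)
    qed
    also have "\<dots> = (\<Sum>s\<in>F. measure P (A s))"
      unfolding A_def using h by (intro sum.cong refl) (simp add: motor_process_measure_two_times[OF J])
    also have "\<dots> = measure P (\<Union>s\<in>F. A s)"
      using F(1) A by (intro finite_measure_finite_Union[symmetric]) (auto simp: disjoint_family_on_def A_def)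
    finally have "(1 - \<delta>) * (1 - \<eta>) \<le> measure P (\<Union>s\<in>F. A s)" .
    moreover have "1 - \<delta> - \<eta> \<le> (1 - \<delta>) * (1 - \<eta>)"
      using mult_nonneg_nonneg[OF \<open>\<delta> \<ge> 0\<close>, of \<eta>] \<open>0 < \<eta>\<close> by (simp add: algebra_simps)
    ultimately show ?thesis by linarith
  next
    case False
    then show ?thesis
      using \<open>0 < \<eta>\<close> measure_nonneg[of P "\<Union>s\<in>F. A s"] by linarith
  qed
  then have "measure P (space P - (\<Union>s\<in>F. A s)) \<le> \<delta> + \<eta>"
    using prob_compl[OF UA] by linarith
  moreover have "{\<omega> \<in> space P. J \<omega> (t - h) \<noteq> J \<omega> t} \<subseteq> space P - (\<Union>s\<in>F. A s)"
    unfolding A_def by auto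
  ultimately show ?thesis
    using UA that unfolding \<delta>_def by blast
qed

text \<open>A jump at a fixed time \<open>t\<close> forces the event of \<open>left_change_event\<close> for all small \<open>h\<close>;
  their probabilities tend to \<open>0\<close>.\<close>
lemma AE_no_jump_at:
  assumes "prob_space P" and J: "motor_process M lon loff lstep P J" and t: "0 < t"
  shows "AE \<omega> in P. \<exists>d>0. \<forall>r. t - d < r \<and> r < t + d \<longrightarrow> J \<omega> r = J \<omega> t"
proof -
  interpret prob_space P by fact
  define h where "h m = t / real (m + 2)" for m :: nat
  define \<eta> where "\<eta> m = 1 / real (m + 1)" for m :: nat
  have h: "0 < h m" "h m < t" for m
    using t unfolding h_def by (auto simp: field_simps add_pos_nonneg)
  have "\<forall>m. \<exists>E. E \<in> sets P \<and> measure P E \<le> exp (2 * rate_bound * h m) - 1 + \<eta> m \<and>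
      {\<omega> \<in> space P. J \<omega> (t - h m) \<noteq> J \<omega> t} \<subseteq> E"
  proof
    fix m
    have "0 < \<eta> m" unfolding \<eta>_def by simp
    then obtain E where "E \<in> sets P" "measure P E \<le> exp (2 * rate_bound * h m) - 1 + \<eta> m"
      "{\<omega> \<in> space P. J \<omega> (t - h m) \<noteq> J \<omega> t} \<subseteq> E"
      using left_change_event[OF \<open>prob_space P\<close> J h] by blast
    then show "\<exists>E. E \<in> sets P \<and> measure P E \<le> exp (2 * rate_bound * h m) - 1 + \<eta> m \<and>
      {\<omega> \<in> space P. J \<omega> (t - h m) \<noteq> J \<omega> t} \<subseteq> E" by blast
  qed
  then obtain E where "\<forall>m. E m \<in> sets P \<and> measure P (E m) \<le> exp (2 * rate_bound * h m) - 1 + \<eta> m \<and>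
      {\<omega> \<in> space P. J \<omega> (t - h m) \<noteq> J \<omega> t} \<subseteq> E m"
    by (elim choice[THEN exE])
  then have E: "\<And>m. E m \<in> sets P"
    "\<And>m. measure P (E m) \<le> exp (2 * rate_bound * h m) - 1 + \<eta> m"
    "\<And>m. {\<omega> \<in> space P. J \<omega> (t - h m) \<noteq> J \<omega> t} \<subseteq> E m"
    by blast+
  have "h \<longlonglongrightarrow> 0"
  proof -
    have "(\<lambda>m. t * inverse (real (Suc (Suc m)))) \<longlonglongrightarrow> t * 0"
      by (intro tendsto_mult tendsto_const LIMSEQ_Suc[OF LIMSEQ_inverse_real_of_nat])
    then show ?thesis unfolding h_def by (simp add: divide_inverse)
  qed
  moreover have "\<eta> \<longlonglongrightarrow> 0"
    unfolding \<eta>_def using LIMSEQ_inverse_real_of_nat by (simp add: inverse_eq_divide)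
  ultimately have "(\<lambda>m. exp (2 * rate_bound * h m) - 1 + \<eta> m) \<longlonglongrightarrow> exp (2 * rate_bound * 0) - 1 + 0"
    by (intro tendsto_intros)
  then have bound_lim: "(\<lambda>m. exp (2 * rate_bound * h m) - 1 + \<eta> m) \<longlonglongrightarrow> 0"
    by simp
  have "(\<lambda>m. measure P (E m)) \<longlonglongrightarrow> 0"
    using E(2) by (intro tendsto_sandwich[OF _ _ tendsto_const bound_lim]) auto
  then have null: "(\<Union>N. \<Inter>m\<in>{N..}. E m) \<in> null_sets P"
    using E(1) by (rule null_sets_eventually_in)
  show ?thesis
  proof (rule AE_I'[OF null], safe)
    fix \<omega> assume \<omega>: "\<omega> \<in> space P"
      and jump: "\<not> (\<exists>d>0. \<forall>r. t - d < r \<and> r < t + d \<longrightarrow> J \<omega> r = J \<omega> t)"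
    obtain d where d: "0 < d" "\<And>h. 0 < h \<Longrightarrow> h < d \<Longrightarrow> J \<omega> (t - h) \<noteq> J \<omega> t"
      using motor_process_path(2)[OF J \<omega>] t jump by (rule step_path_left_values_differ_at_jump) blast
    have "\<omega> \<in> (\<Inter>m\<in>{nat \<lceil>t / d\<rceil>..}. E m)"
    proof
      fix m assume "m \<in> {nat \<lceil>t / d\<rceil>..}"
      then have "real (nat \<lceil>t / d\<rceil>) \<le> real m" by simp
      with real_nat_ceiling_ge[of "t / d"] have "t / d < real (m + 2)" by linarith
      then have "h m < d" unfolding h_def using d(1) t by (simp add: field_simps)
      then have "J \<omega> (t - h m) \<noteq> J \<omega> t"
        by (rule d(2)[OF h(1)])
      then show "\<omega> \<in> E m"
        using E(3)[of m] \<omega> by blast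
    qed
    then show "\<omega> \<in> (\<Union>N. \<Inter>m\<in>{N..}. E m)" by blast
  qed
qed

end

lemma tau_bounds:
  assumes "j 0 i = None" and "j r i \<noteq> None" and "0 \<le> r"
  shows "0 \<le> tau j i r" and "tau j i r \<le> r"
proof -
  have "0 < r" using assms by (cases "r = 0") auto
  then have mem: "0 \<in> {s. 0 \<le> s \<and> s < r \<and> j s i = None}" using assms(1) by auto
  show "0 \<le> tau j i r" unfolding tau_def
    by (rule cSup_upper[OF mem]) (auto intro: bdd_aboveI[of _ r])
  show "tau j i r \<le> r" unfolding tau_def
    by (rule cSup_least) (use mem in auto)
qed

lemma tau_eq_if_bound_between:
  assumes "r1 \<le> r2" and "\<And>s. r1 \<le> s \<Longrightarrow> s < r2 \<Longrightarrow> j s i \<noteq> None"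
  shows "tau j i r1 = tau j i r2"
proof -
  have "{s. 0 \<le> s \<and> s < r1 \<and> j s i = None} = {s. 0 \<le> s \<and> s < r2 \<and> j s i = None}"
    using assms by (force simp: not_le)
  then show ?thesis unfolding tau_def by simp
qed

lemma tau_eq_of_constant_between:
  assumes const: "\<And>s. min r q \<le> s \<Longrightarrow> s \<le> max r q \<Longrightarrow> j s = j q" and bound: "j r i \<noteq> None"
  shows "tau j i r = tau j i q"
proof -
  have "j s i \<noteq> None" if "min r q \<le> s" "s \<le> max r q" for s
    using const[OF that] const[of r] bound by simp
  then show ?thesis
    by (cases "r \<le> q") (auto intro!: tau_eq_if_bound_between simp: min_def max_def
        tau_eq_if_bound_between[of q r, symmetric])
qed

lemma step_path_local_reference_points:
  fixes j :: "real \<Rightarrow> mstate"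
  assumes "step_path j" and "0 \<le> c"
  obtains d p where "0 < d"
    "\<And>r. 0 \<le> r \<Longrightarrow> \<bar>r - c\<bar> < d \<Longrightarrow>
        \<exists>q\<in>{c, p}. j r = j q \<and> (\<forall>i. j r i \<noteq> None \<longrightarrow> tau j i r = tau j i q)"
proof -
  have "\<exists>d>0. \<forall>s. c \<le> s \<and> s < c + d \<longrightarrow> j s = j c"
    using assms unfolding step_path_def by blast
  then obtain d1 where d1: "0 < d1" "\<And>s. c \<le> s \<Longrightarrow> s < c + d1 \<Longrightarrow> j s = j c"
    by blast
  have right: "j r = j c \<and> (\<forall>i. j r i \<noteq> None \<longrightarrow> tau j i r = tau j i c)"
    if "c \<le> r" "r < c + d1" for r
  proof -
    have const: "j s = j c" if "min r c \<le> s" "s \<le> max r c" for s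
      using d1(2)[of s] that \<open>c \<le> r\<close> \<open>r < c + d1\<close> by simp
    show ?thesis
      using const[of r] tau_eq_of_constant_between[of r c j, OF const] by simp
  qed
  show ?thesis
  proof (cases "c = 0")
    case True
    show ?thesis
    proof (rule that[OF d1(1)])
      fix r assume "0 \<le> r" "\<bar>r - c\<bar> < d1"
      with True have "j r = j c \<and> (\<forall>i. j r i \<noteq> None \<longrightarrow> tau j i r = tau j i c)"
        by (intro right) auto
      then show "\<exists>q\<in>{c, c}. j r = j q \<and> (\<forall>i. j r i \<noteq> None \<longrightarrow> tau j i r = tau j i q)"
        by blast
    qed
  next
    case False
    with assms(2) have "0 < c" by simp
    then have "\<exists>d>0. \<forall>s. c - d < s \<and> s < c \<longrightarrow> j s = j (c - d / 2)"
      using assms(1) unfolding step_path_def by blast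
    then obtain d2 where d2: "0 < d2" "\<And>s. c - d2 < s \<Longrightarrow> s < c \<Longrightarrow> j s = j (c - d2 / 2)"
      by blast
    have left: "j r = j (c - d2 / 2) \<and> (\<forall>i. j r i \<noteq> None \<longrightarrow> tau j i r = tau j i (c - d2 / 2))"
      if "c - d2 < r" "r < c" for r
    proof -
      have const: "j s = j (c - d2 / 2)" if "min r (c - d2 / 2) \<le> s" "s \<le> max r (c - d2 / 2)" for s
        using d2(2)[of s] d2(1) that \<open>c - d2 < r\<close> \<open>r < c\<close> by simp
      show ?thesis
        using const[of r] tau_eq_of_constant_between[of r "c - d2 / 2" j, OF const] by simp
    qed
    show ?thesis
    proof (rule that[of "min d1 d2" "c - d2 / 2"])
      fix r assume "0 \<le> r" "\<bar>r - c\<bar> < min d1 d2"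
      then have "(c \<le> r \<and> r < c + d1) \<or> (c - d2 < r \<and> r < c)"
        by (auto simp: abs_less_iff)
      then show "\<exists>q\<in>{c, c - d2 / 2}. j r = j q \<and> (\<forall>i. j r i \<noteq> None \<longrightarrow> tau j i r = tau j i q)"
        using left[of r] right[of r] by blast
    qed (use d1(1) d2(1) in simp)
  qed
qed

lemma step_path_finite_reference_points:
  fixes j :: "real \<Rightarrow> mstate"
  assumes "step_path j" and "0 \<le> T"
  obtains R where "finite R"
    "\<And>r. r \<in> {0..T} \<Longrightarrow> \<exists>q\<in>R. j r = j q \<and> (\<forall>i. j r i \<noteq> None \<longrightarrow> tau j i r = tau j i q)"
proof -
  have "\<forall>c\<in>{0..T}. \<exists>dp. 0 < fst dp \<and> (\<forall>r. 0 \<le> r \<and> \<bar>r - c\<bar> < fst dp \<longrightarrow>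
      (\<exists>q\<in>{c, snd dp}. j r = j q \<and> (\<forall>i. j r i \<noteq> None \<longrightarrow> tau j i r = tau j i q)))"
  proof
    fix c assume "c \<in> {0..T}"
    then obtain d p where "0 < d" "\<And>r. 0 \<le> r \<Longrightarrow> \<bar>r - c\<bar> < d \<Longrightarrow>
        \<exists>q\<in>{c, p}. j r = j q \<and> (\<forall>i. j r i \<noteq> None \<longrightarrow> tau j i r = tau j i q)"
      using step_path_local_reference_points[OF assms(1)] by (metis atLeastAtMost_iff)
    then show "\<exists>dp. 0 < fst dp \<and> (\<forall>r. 0 \<le> r \<and> \<bar>r - c\<bar> < fst dp \<longrightarrow>
      (\<exists>q\<in>{c, snd dp}. j r = j q \<and> (\<forall>i. j r i \<noteq> None \<longrightarrow> tau j i r = tau j i q)))"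
      by (intro exI[of _ "(d, p)"]) auto
  qed
  then obtain dp where dp: "\<And>c. c \<in> {0..T} \<Longrightarrow> 0 < fst (dp c)"
    "\<And>c r. c \<in> {0..T} \<Longrightarrow> 0 \<le> r \<Longrightarrow> \<bar>r - c\<bar> < fst (dp c) \<Longrightarrow>
      \<exists>q\<in>{c, snd (dp c)}. j r = j q \<and> (\<forall>i. j r i \<noteq> None \<longrightarrow> tau j i r = tau j i q)"
    by metis
  have cover: "{0..T} \<subseteq> (\<Union>c\<in>{0..T}. ball c (fst (dp c)))"
    using dp(1) by force
  obtain C where C: "C \<subseteq> {0..T}" "finite C" "{0..T} \<subseteq> (\<Union>c\<in>C. ball c (fst (dp c)))"
    by (rule compactE_image[OF compact_Icc _ cover]) simp
  show ?thesis
  proof (rule that[of "\<Union>c\<in>C. {c, snd (dp c)}"])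
    fix r assume r: "r \<in> {0..T}"
    then obtain c where c: "c \<in> C" "\<bar>r - c\<bar> < fst (dp c)"
      using C(3) by (auto simp: dist_real_def abs_minus_commute)
    then have "c \<in> {0..T}" using C(1) by auto
    with dp(2)[OF this _ c(2)] r obtain q where "q \<in> {c, snd (dp c)}"
      "j r = j q \<and> (\<forall>i. j r i \<noteq> None \<longrightarrow> tau j i r = tau j i q)"
      by auto
    with c(1) show "\<exists>q\<in>\<Union>c\<in>C. {c, snd (dp c)}.
        j r = j q \<and> (\<forall>i. j r i \<noteq> None \<longrightarrow> tau j i r = tau j i q)"
      by blast
  qed (use C(2) in auto)
qed

definition binding_times :: "nat \<Rightarrow> (real \<Rightarrow> mstate) \<Rightarrow> real \<Rightarrow> real set" where
  "binding_times M j T = {tau j i r | r i. r \<in> {0..T} \<and> i \<in> {1..M} \<and> j r i \<noteq> None}"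

lemma step_path_finite_binding_times:
  fixes j :: "real \<Rightarrow> mstate"
  assumes "step_path j" and "0 \<le> T"
  shows "finite (binding_times M j T)"
proof -
  obtain R where R: "finite R"
    "\<And>r. r \<in> {0..T} \<Longrightarrow> \<exists>q\<in>R. j r = j q \<and> (\<forall>i. j r i \<noteq> None \<longrightarrow> tau j i r = tau j i q)"
    using step_path_finite_reference_points[OF assms] by blast
  have "binding_times M j T \<subseteq> (\<lambda>(q, i). tau j i q) ` (R \<times> {1..M})"
  proof
    fix x assume "x \<in> binding_times M j T"
    then obtain r i where x: "x = tau j i r" "r \<in> {0..T}" "i \<in> {1..M}" "j r i \<noteq> None"
      unfolding binding_times_def by blast
    with R(2)[of r] obtain q where "q \<in> R" "tau j i r = tau j i q" by blast
    with x show "x \<in> (\<lambda>(q, i). tau j i q) ` (R \<times> {1..M})"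
      by force
  qed
  then show ?thesis
    using R(1) by (meson finite_SigmaI finite_atLeastAtMost finite_imageI finite_subset)
qed

lemma step_path_bounded_steps:
  fixes j :: "real \<Rightarrow> mstate"
  assumes "step_path j" and "0 \<le> T"
  obtains N where "\<And>r i n. r \<in> {0..T} \<Longrightarrow> i \<in> {1..M} \<Longrightarrow> j r i = Some n \<Longrightarrow> n \<le> N"
proof -
  obtain R where R: "finite R"
    "\<And>r. r \<in> {0..T} \<Longrightarrow> \<exists>q\<in>R. j r = j q \<and> (\<forall>i. j r i \<noteq> None \<longrightarrow> tau j i r = tau j i q)"
    using step_path_finite_reference_points[OF assms] by blast
  define steps where "steps = (\<lambda>(q, i). case j q i of None \<Rightarrow> 0 | Some n \<Rightarrow> n) ` (R \<times> {1..M})"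
  have "finite steps" unfolding steps_def using R(1) by simp
  then obtain N where N: "\<And>n. n \<in> steps \<Longrightarrow> n \<le> N"
    by (auto simp: finite_nat_set_iff_bounded_le)
  show ?thesis
  proof (rule that)
    fix r i n assume "r \<in> {0..T}" "i \<in> {1..M}" "j r i = Some n"
    then have "n \<in> steps"
      unfolding steps_def using R(2)[of r] by (force split: option.split)
    then show "n \<le> N" by (rule N)
  qed
qed

lemma binding_times_nonneg:
  assumes "j 0 = (\<lambda>_. None)" and "u \<in> binding_times M j T"
  shows "0 \<le> u"
  using assms tau_bounds(1)[of j] unfolding binding_times_def by auto

section \<open>The cargo\<close>

lemma abs_cargoZ_diff_le:
  fixes j :: "real \<Rightarrow> mstate" and X W :: "real \<Rightarrow> real"
  assumes "j 0 = (\<lambda>_. None)" and "0 \<le> \<sigma>" and r: "r \<in> {0..T}" and i: "i \<in> {1..M}"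
    and steps: "\<And>r i n. r \<in> {0..T} \<Longrightarrow> i \<in> {1..M} \<Longrightarrow> j r i = Some n \<Longrightarrow> n \<le> N"
    and "finite (binding_times M j T)"
    and past: "\<And>u. 0 \<le> u \<Longrightarrow> u \<le> r \<Longrightarrow> \<bar>X u - \<sigma> * W u\<bar> \<le> B"
  shows "\<bar>cargoZ j X i r - X r\<bar> \<le> 2 * B + \<sigma> * (\<Sum>u\<in>binding_times M j T. \<bar>W u\<bar>) + N + \<sigma> * \<bar>W r\<bar>"
proof (cases "j r i")
  case None
  have "0 \<le> B" using past[of 0] r by (meson abs_ge_zero atLeastAtMost_iff order.trans order_refl)
  with None assms(2) show ?thesis
    unfolding cargoZ_def by (simp add: sum_nonneg)
next
  case (Some n)
  let ?\<tau> = "tau j i r"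
  have "0 \<le> ?\<tau>" "?\<tau> \<le> r" using tau_bounds[of j i r] assms(1) Some r by auto
  have "?\<tau> \<in> binding_times M j T"
    unfolding binding_times_def using r i Some by blast
  then have W_\<tau>: "\<bar>W ?\<tau>\<bar> \<le> (\<Sum>u\<in>binding_times M j T. \<bar>W u\<bar>)"
    using assms(6) by (intro member_le_sum) auto
  have "\<bar>cargoZ j X i r - X r\<bar>
      = \<bar>(X ?\<tau> - \<sigma> * W ?\<tau>) + \<sigma> * W ?\<tau> + n - ((X r - \<sigma> * W r) + \<sigma> * W r)\<bar>"
    using Some unfolding cargoZ_def by simp
  also have "\<dots> \<le> \<bar>X ?\<tau> - \<sigma> * W ?\<tau>\<bar> + \<bar>\<sigma> * W ?\<tau>\<bar> + n + \<bar>X r - \<sigma> * W r\<bar> + \<bar>\<sigma> * W r\<bar>"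
    using of_nat_0_le_iff[of n] by arith
  also have "\<dots> = \<bar>X ?\<tau> - \<sigma> * W ?\<tau>\<bar> + \<sigma> * \<bar>W ?\<tau>\<bar> + n + \<bar>X r - \<sigma> * W r\<bar> + \<sigma> * \<bar>W r\<bar>"
    using assms(2) by (simp add: abs_mult)
  also have "\<dots> \<le> B + \<sigma> * (\<Sum>u\<in>binding_times M j T. \<bar>W u\<bar>) + N + B + \<sigma> * \<bar>W r\<bar>"
    using past \<open>0 \<le> ?\<tau>\<close> \<open>?\<tau> \<le> r\<close> r W_\<tau> steps[OF r i Some] assms(2)
    by (intro add_mono mult_left_mono) auto
  finally show ?thesis by simp
qed

lemma cargo_minus_noise_bound:
  fixes j :: "real \<Rightarrow> mstate" and Xf Wf :: "real \<Rightarrow> real" and M :: nat and N :: nat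
  assumes M: "M \<ge> 1" and eps: "\<epsilon> > 0" and sig: "\<sigma> \<ge> 0" and T: "T \<ge> 0"
    and j0: "j 0 = (\<lambda>_. None)"
    and steps: "\<And>r i n. r \<in> {0..T} \<Longrightarrow> i \<in> {1..M} \<Longrightarrow> j r i = Some n \<Longrightarrow> n \<le> N"
    and fU: "finite (binding_times M j T)"
    and Wc: "continuous_on {0..} Wf"
    and sde: "\<And>s. s \<ge> 0 \<Longrightarrow> ((\<lambda>r. (1 / \<epsilon>) * (\<Sum>i\<in>{1..M}. cargoZ j Xf i r - Xf r)) has_integral (Xf s - \<sigma> * Wf s)) {0..s}"
    and r: "r \<in> {0..T}"
  shows "\<bar>Xf r - \<sigma> * Wf r\<bar> \<le> 2 * exp (2 * (2 * M / \<epsilon>) * T) *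
           ((M / \<epsilon>) * ((\<sigma> * (\<Sum>u\<in>binding_times M j T. \<bar>Wf u\<bar>) + N) * T + \<sigma> * integral {0..T} (\<lambda>r. \<bar>Wf r\<bar>)))"
proof -
  define WU where "WU = (\<Sum>u\<in>binding_times M j T. \<bar>Wf u\<bar>)"
  define K where "K = 2 * M / \<epsilon>"
  define w where "w r = (M / \<epsilon>) * (\<sigma> * WU + N + \<sigma> * \<bar>Wf r\<bar>)" for r
  define Y where "Y r = Xf r - \<sigma> * Wf r" for r
  define f where "f r = (1 / \<epsilon>) * (\<Sum>i\<in>{1..M}. cargoZ j Xf i r - Xf r)" for r
  have K: "K > 0" unfolding K_def using M eps by simp
  have WU0: "WU \<ge> 0" unfolding WU_def by (intro sum_nonneg) auto
  have WcT: "continuous_on {0..T} Wf" using Wc by (rule continuous_on_subset) auto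
  have wc: "continuous_on {0..T} w" unfolding w_def by (intro continuous_intros WcT)
  have wnn: "w r \<ge> 0" for r unfolding w_def using eps sig WU0 by (intro mult_nonneg_nonneg add_nonneg_nonneg) auto
  have fb: "\<bar>f r\<bar> \<le> K * B + w r" if r: "r \<in> {0..T}" and B: "\<And>u. 0 \<le> u \<Longrightarrow> u \<le> r \<Longrightarrow> \<bar>Y u\<bar> \<le> B" for r B
  proof -
    have trm: "\<bar>cargoZ j Xf i r - Xf r\<bar> \<le> 2 * B + \<sigma> * WU + N + \<sigma> * \<bar>Wf r\<bar>" if "i \<in> {1..M}" for i
      unfolding WU_def using j0 sig r that steps fU B unfolding Y_def by (rule abs_cargoZ_diff_le)
    have "\<bar>f r\<bar> = (1 / \<epsilon>) * \<bar>\<Sum>i\<in>{1..M}. cargoZ j Xf i r - Xf r\<bar>"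
      unfolding f_def using eps by (simp add: abs_mult)
    also have "\<dots> \<le> (1 / \<epsilon>) * (\<Sum>i\<in>{1..M}. \<bar>cargoZ j Xf i r - Xf r\<bar>)"
      using eps by (intro mult_left_mono sum_abs) auto
    also have "\<dots> \<le> (1 / \<epsilon>) * (\<Sum>i\<in>{1..M}. 2 * B + \<sigma> * WU + N + \<sigma> * \<bar>Wf r\<bar>)"
      using eps trm by (intro mult_left_mono sum_mono) auto
    also have "\<dots> = K * B + w r"
      unfolding K_def w_def using eps by (simp add: field_simps)
    finally show ?thesis .
  qed
  have Yint: "(f has_integral Y s) {0..s}" if "s \<in> {0..T}" for s
    unfolding f_def Y_def using sde that by auto
  have G: "\<bar>Y r\<bar> \<le> 2 * exp (2 * K * T) * integral {0..T} w"
    by (rule gronwall_past_dependent[OF T K Yint fb wc wnn r]) auto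
  have WaT: "(\<lambda>r. \<bar>Wf r\<bar>) integrable_on {0..T}"
    by (intro integrable_continuous_interval continuous_intros WcT)
  have "integral {0..T} w = (M / \<epsilon>) * ((\<sigma> * WU + N) * T + \<sigma> * integral {0..T} (\<lambda>r. \<bar>Wf r\<bar>))"
  proof -
    have "(w has_integral ((M / \<epsilon>) * ((\<sigma> * WU + N) * T + \<sigma> * integral {0..T} (\<lambda>r. \<bar>Wf r\<bar>)))) {0..T}"
      unfolding w_def
      using has_integral_mult_right[OF has_integral_add[OF has_integral_const_real[of "\<sigma> * WU + N" 0 T]
             has_integral_mult_right[OF integrable_integral[OF WaT], of \<sigma>]], of "M / \<epsilon>"] T
      by (simp add: add.assoc mult.commute)
    then show ?thesis by (rule integral_unique)
  qed
  then show ?thesis using G unfolding Y_def K_def WU_def by simp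
qed

lemma cargoZ_frozen:
  fixes j :: "real \<Rightarrow> mstate"
  assumes frozen: "\<And>s. s \<in> {lo..hi} \<Longrightarrow> j s = j t" and "t \<in> {lo..hi}" "r \<in> {lo..hi}"
  shows "cargoZ j X i r = (case j t i of None \<Rightarrow> X r | Some n \<Rightarrow> X (tau j i t) + real n)"
proof (cases "j t i")
  case (Some n)
  have const: "j s = j t" if "min r t \<le> s" "s \<le> max r t" for s
    using that assms(2,3) by (intro frozen) auto
  have "tau j i r = tau j i t"
    by (rule tau_eq_of_constant_between[of r t j, OF const]) (use Some frozen[OF assms(3)] in simp_all)
  then show ?thesis
    using Some frozen[OF assms(3)] unfolding cargoZ_def by simp
qed (use frozen[OF assms(3)] in \<open>simp add: cargoZ_def\<close>)

lemma cargo_minus_noise_dominated: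
  fixes j :: "real \<Rightarrow> mstate" and X W :: "'b \<Rightarrow> real \<Rightarrow> real"
  assumes "1 \<le> M" and "0 < \<epsilon>" and "0 \<le> \<sigma>" and "0 \<le> T"
    and "prob_space P" and W: "brownian P W"
    and j: "j 0 = (\<lambda>_. None)" "step_path j"
    and sde: "\<And>\<omega> s. \<omega> \<in> space P \<Longrightarrow> 0 \<le> s \<Longrightarrow>
        ((\<lambda>r. (1 / \<epsilon>) * (\<Sum>i\<in>{1..M}. cargoZ j (X \<omega>) i r - X \<omega> r)) has_integral (X \<omega> s - \<sigma> * W \<omega> s)) {0..s}"
  obtains D where "integrable P D"
    "\<And>\<omega> r. \<omega> \<in> space P \<Longrightarrow> r \<in> {0..T} \<Longrightarrow> \<bar>X \<omega> r - \<sigma> * W \<omega> r\<bar> \<le> D \<omega>"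
proof -
  interpret prob_space P by fact
  obtain N where N: "\<And>r i n. r \<in> {0..T} \<Longrightarrow> i \<in> {1..M} \<Longrightarrow> j r i = Some n \<Longrightarrow> n \<le> N"
    using step_path_bounded_steps[OF j(2) \<open>0 \<le> T\<close>] by blast
  let ?U = "binding_times M j T"
  have U: "finite ?U"
    using step_path_finite_binding_times[OF j(2) \<open>0 \<le> T\<close>] .
  define D where "D \<omega> = 2 * exp (2 * (2 * M / \<epsilon>) * T) * ((M / \<epsilon>) *
      ((\<sigma> * (\<Sum>u\<in>?U. \<bar>W \<omega> u\<bar>) + N) * T + \<sigma> * integral {0..T} (\<lambda>r. \<bar>W \<omega> r\<bar>)))" for \<omega>
  show ?thesis
  proof (rule that)
    have "integrable P (\<lambda>\<omega>. \<Sum>u\<in>?U. \<bar>W \<omega> u\<bar>)"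
      using brownian_moments(3)[OF W] binding_times_nonneg[of j, OF j(1)] by auto
    moreover have "integrable P (\<lambda>\<omega>. integral {0..T} (\<lambda>r. \<bar>W \<omega> r\<bar>))"
      using integrable_continuous_process.integrable_path_integral
        brownian_integrable_continuous_process(2)[OF W order.refl] by blast
    ultimately show "integrable P D"
      unfolding D_def by (intro integrable_mult_right integrable_add integrable_mult_left) auto
    show "\<bar>X \<omega> r - \<sigma> * W \<omega> r\<bar> \<le> D \<omega>" if "\<omega> \<in> space P" "r \<in> {0..T}" for \<omega> r
      unfolding D_def using assms(1-4) j(1) N U brownian_continuous[OF W that(1)] sde[OF that(1)] that(2)
      by (rule cargo_minus_noise_bound)
  qed
qed

definition anchor_sum :: "nat \<Rightarrow> (real \<Rightarrow> mstate) \<Rightarrow> (real \<Rightarrow> real) \<Rightarrow> real \<Rightarrow> real" where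
  "anchor_sum M j x t = (\<Sum>i\<in>{1..M}. case j t i of None \<Rightarrow> 0 | Some n \<Rightarrow> x (tau j i t) + real n)"

lemma sum_cargoZ_frozen:
  fixes j :: "real \<Rightarrow> mstate"
  assumes "\<And>s. s \<in> {lo..hi} \<Longrightarrow> j s = j t" and "t \<in> {lo..hi}" "r \<in> {lo..hi}"
  shows "(\<Sum>i\<in>{1..M}. cargoZ j x i r - x r) = anchor_sum M j x t - real (occ M (j t)) * x r"
proof -
  have "cargoZ j x i r - x r
      = (case j t i of None \<Rightarrow> 0 | Some n \<Rightarrow> x (tau j i t) + real n) - of_bool (j t i \<noteq> None) * x r" for i
    using cargoZ_frozen[where j = j and lo = lo and hi = hi and t = t and r = r, OF assms, of x i]
    by (auto split: option.split)
  moreover have "real (occ M (j t)) = (\<Sum>i\<in>{1..M}. of_bool (j t i \<noteq> None))"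
    unfolding occ_def by (simp add: sum_of_bool_eq Int_def conj_ac)
  ultimately show ?thesis
    unfolding anchor_sum_def by (simp add: sum_subtractf sum_distrib_right)
qed

lemma (in finite_measure) integrable_cargoZ:
  fixes j :: "real \<Rightarrow> mstate"
  assumes "j 0 = (\<lambda>_. None)" and "0 \<le> t"
    and "\<And>r. r \<in> {0..t} \<Longrightarrow> integrable M (\<lambda>\<omega>. X \<omega> r)"
  shows "integrable M (\<lambda>\<omega>. cargoZ j (X \<omega>) i t)"
proof (cases "j t i")
  case (Some n)
  then have "tau j i t \<in> {0..t}"
    using tau_bounds[of j i t] assms(1,2) by simp
  with Some assms(3) show ?thesis
    unfolding cargoZ_def by auto
qed (use assms(2,3) in \<open>simp add: cargoZ_def\<close>)

lemma integrable_cargo: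
  fixes j :: "real \<Rightarrow> mstate" and X W :: "'b \<Rightarrow> real \<Rightarrow> real"
  assumes "1 \<le> M" and "0 < \<epsilon>" and "0 \<le> \<sigma>"
    and "prob_space P" and W: "brownian P W"
    and X_meas: "\<And>s. (\<lambda>\<omega>. X \<omega> s) \<in> borel_measurable P"
    and j: "j 0 = (\<lambda>_. None)" "step_path j"
    and sde: "\<And>\<omega> s. \<omega> \<in> space P \<Longrightarrow> 0 \<le> s \<Longrightarrow>
        ((\<lambda>r. (1 / \<epsilon>) * (\<Sum>i\<in>{1..M}. cargoZ j (X \<omega>) i r - X \<omega> r)) has_integral (X \<omega> s - \<sigma> * W \<omega> s)) {0..s}"
    and "0 \<le> r"
  shows "integrable P (\<lambda>\<omega>. X \<omega> r - \<sigma> * W \<omega> r)" and "integrable P (\<lambda>\<omega>. X \<omega> r)"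
    and "(\<integral>\<omega>. X \<omega> r \<partial>P) = (\<integral>\<omega>. X \<omega> r - \<sigma> * W \<omega> r \<partial>P)"
proof -
  interpret prob_space P by fact
  obtain D where D: "integrable P D"
    "\<And>\<omega> s. \<omega> \<in> space P \<Longrightarrow> s \<in> {0..r} \<Longrightarrow> \<bar>X \<omega> s - \<sigma> * W \<omega> s\<bar> \<le> D \<omega>"
    by (rule cargo_minus_noise_dominated[OF assms(1-3) \<open>0 \<le> r\<close> assms(4) W j sde])
      (assumption | rule that)+
  show Y: "integrable P (\<lambda>\<omega>. X \<omega> r - \<sigma> * W \<omega> r)"
  proof (rule Bochner_Integration.integrable_bound[OF D(1)])
    show "(\<lambda>\<omega>. X \<omega> r - \<sigma> * W \<omega> r) \<in> borel_measurable P"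
      using X_meas borel_measurable_integrable[OF brownian_moments(1)[OF W \<open>0 \<le> r\<close>]] by auto
    show "AE \<omega> in P. norm (X \<omega> r - \<sigma> * W \<omega> r) \<le> norm (D \<omega>)"
    proof (rule AE_I2)
      fix \<omega> assume "\<omega> \<in> space P"
      then have "\<bar>X \<omega> r - \<sigma> * W \<omega> r\<bar> \<le> D \<omega>"
        using \<open>0 \<le> r\<close> by (intro D(2)) auto
      then have "\<bar>X \<omega> r - \<sigma> * W \<omega> r\<bar> \<le> \<bar>D \<omega>\<bar>"
        by linarith
      then show "norm (X \<omega> r - \<sigma> * W \<omega> r) \<le> norm (D \<omega>)" by simp
    qed
  qed
  have X: "(\<lambda>\<omega>. X \<omega> r) = (\<lambda>\<omega>. (X \<omega> r - \<sigma> * W \<omega> r) + \<sigma> * W \<omega> r)" by simp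
  show "integrable P (\<lambda>\<omega>. X \<omega> r)"
    by (subst X) (intro Bochner_Integration.integrable_add integrable_mult_right Y
        brownian_moments(1)[OF W \<open>0 \<le> r\<close>])
  show "(\<integral>\<omega>. X \<omega> r \<partial>P) = (\<integral>\<omega>. X \<omega> r - \<sigma> * W \<omega> r \<partial>P)"
    using Bochner_Integration.integral_add[OF Y integrable_mult_right[where c = \<sigma>, OF brownian_moments(1)[OF W \<open>0 \<le> r\<close>]]]
      brownian_moments(2)[OF W \<open>0 \<le> r\<close>]
    by simp
qed

text \<open>Adding \<open>(k \<sigma> / \<epsilon>) \<integral> w\<close> removes the noise from the drift while the configuration is
  frozen.\<close>
lemma cargo_frozen_shift:
  fixes j :: "real \<Rightarrow> mstate" and x w :: "real \<Rightarrow> real"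
  assumes sde: "\<And>s. 0 \<le> s \<Longrightarrow>
        ((\<lambda>r. (1 / \<epsilon>) * (\<Sum>i\<in>{1..M}. cargoZ j x i r - x r)) has_integral (x s - \<sigma> * w s)) {0..s}"
    and frozen: "\<And>s. s \<in> {lo..hi} \<Longrightarrow> j s = j t" and "t \<in> {lo..hi}" and "0 \<le> lo"
    and w: "continuous_on {lo..hi} w" and s: "s \<in> {lo..hi}"
  shows "x s - \<sigma> * w s + (real (occ M (j t)) * \<sigma> / \<epsilon>) * integral {lo..s} w
    = x lo - \<sigma> * w lo + integral {lo..s} (\<lambda>r. (anchor_sum M j x t - real (occ M (j t)) * (x r - \<sigma> * w r)) / \<epsilon>)"
proof (rule indefinite_integral_shift[OF sde])
  show "continuous_on {lo..s} w"
    using s by (intro continuous_on_subset[OF w]) auto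
  fix r assume r: "r \<in> {lo..s}"
  then have "(\<Sum>i\<in>{1..M}. cargoZ j x i r - x r) = anchor_sum M j x t - real (occ M (j t)) * x r"
    using s by (intro sum_cargoZ_frozen[where j = j and t = t, OF frozen \<open>t \<in> {lo..hi}\<close>]) auto
  then show "(1 / \<epsilon>) * (\<Sum>i\<in>{1..M}. cargoZ j x i r - x r)
      = (anchor_sum M j x t - real (occ M (j t)) * (x r - \<sigma> * w r)) / \<epsilon>
        - real (occ M (j t)) * \<sigma> / \<epsilon> * w r"
    by (simp add: diff_divide_distrib right_diff_distrib)
qed (use assms in auto)

lemma frozen_window:
  fixes t :: real
  assumes "0 < t" and "\<exists>d>0. \<forall>r. t - d < r \<and> r < t + d \<longrightarrow> j r = j t"
  obtains lo hi where "0 < lo" "lo < t" "t < hi" "\<And>s. s \<in> {lo..hi} \<Longrightarrow> j s = j t"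
proof -
  obtain d where d: "0 < d" "\<And>r. t - d < r \<Longrightarrow> r < t + d \<Longrightarrow> j r = j t"
    using assms(2) by blast
  show ?thesis
  proof (rule that[of "t - min d t / 2" "t + min d t / 2"])
    show "j s = j t" if "s \<in> {t - min d t / 2..t + min d t / 2}" for s
      using that d(1) by (intro d(2)) auto
  qed (use assms(1) d(1) in auto)
qed

lemma (in finite_measure) expectation_sum_cargoZ:
  fixes j :: "real \<Rightarrow> mstate"
  assumes "j 0 = (\<lambda>_. None)" and "0 \<le> t"
    and X: "\<And>r. r \<in> {0..t} \<Longrightarrow> integrable M (\<lambda>\<omega>. X \<omega> r)"
  shows "integrable M (\<lambda>\<omega>. anchor_sum N j (X \<omega>) t)"
    and "(\<Sum>i\<in>{1..N}. (\<integral>\<omega>. cargoZ j (X \<omega>) i t \<partial>M) - (\<integral>\<omega>. X \<omega> t \<partial>M))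
      = (\<integral>\<omega>. anchor_sum N j (X \<omega>) t \<partial>M) - real (occ N (j t)) * (\<integral>\<omega>. X \<omega> t \<partial>M)"
proof -
  have anchor: "anchor_sum N j (X \<omega>) t
      = (\<Sum>i\<in>{1..N}. cargoZ j (X \<omega>) i t - X \<omega> t) + real (occ N (j t)) * X \<omega> t" for \<omega>
    using sum_cargoZ_frozen[where lo = t and hi = t and j = j and t = t and r = t and x = "X \<omega>"]
    by simp
  have "integrable M (\<lambda>\<omega>. cargoZ j (X \<omega>) i t)" for i
    using assms by (intro integrable_cargoZ) auto
  moreover have "integrable M (\<lambda>\<omega>. X \<omega> t)"
    using X assms(2) by simp
  ultimately show "integrable M (\<lambda>\<omega>. anchor_sum N j (X \<omega>) t)"
    "(\<Sum>i\<in>{1..N}. (\<integral>\<omega>. cargoZ j (X \<omega>) i t \<partial>M) - (\<integral>\<omega>. X \<omega> t \<partial>M))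
      = (\<integral>\<omega>. anchor_sum N j (X \<omega>) t \<partial>M) - real (occ N (j t)) * (\<integral>\<omega>. X \<omega> t \<partial>M)"
    unfolding anchor by (auto simp: Bochner_Integration.integral_sum)
qed

lemma expected_cargo_has_derivative:
  fixes j :: "real \<Rightarrow> mstate" and X W :: "'b \<Rightarrow> real \<Rightarrow> real"
  assumes M: "1 \<le> M" and eps: "0 < \<epsilon>" and sig: "0 \<le> \<sigma>"
    and "prob_space P" and W: "brownian P W"
    and X_meas: "\<And>s. (\<lambda>\<omega>. X \<omega> s) \<in> borel_measurable P"
    and j: "j 0 = (\<lambda>_. None)" "step_path j"
    and sde: "\<And>\<omega> s. \<omega> \<in> space P \<Longrightarrow> 0 \<le> s \<Longrightarrow>
        ((\<lambda>r. (1 / \<epsilon>) * (\<Sum>i\<in>{1..M}. cargoZ j (X \<omega>) i r - X \<omega> r)) has_integral (X \<omega> s - \<sigma> * W \<omega> s)) {0..s}"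
    and t: "0 < t" and frozen: "\<exists>d>0. \<forall>r. t - d < r \<and> r < t + d \<longrightarrow> j r = j t"
  shows "((\<lambda>s. \<integral>\<omega>. X \<omega> s \<partial>P) has_real_derivative
      (1 / \<epsilon>) * (\<Sum>i\<in>{1..M}. (\<integral>\<omega>. cargoZ j (X \<omega>) i t \<partial>P) - (\<integral>\<omega>. X \<omega> t \<partial>P))) (at t)"
proof -
  interpret prob_space P by fact
  obtain lo hi where lohi: "0 < lo" "lo < t" "t < hi" and frozen_on: "\<And>s. s \<in> {lo..hi} \<Longrightarrow> j s = j t"
    using frozen_window[OF t frozen] by blast
  have tI: "t \<in> {lo..hi}" using lohi by simp
  obtain D where D: "integrable P D"
    "\<And>\<omega> r. \<omega> \<in> space P \<Longrightarrow> r \<in> {0..hi} \<Longrightarrow> \<bar>X \<omega> r - \<sigma> * W \<omega> r\<bar> \<le> D \<omega>"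
    using cargo_minus_noise_dominated[OF M eps sig _ \<open>prob_space P\<close> W j sde, of hi] lohi
    by (metis less_trans less_imp_le)
  have moments: "integrable P (\<lambda>\<omega>. X \<omega> r - \<sigma> * W \<omega> r)" "integrable P (\<lambda>\<omega>. X \<omega> r)"
    "(\<integral>\<omega>. X \<omega> r \<partial>P) = (\<integral>\<omega>. X \<omega> r - \<sigma> * W \<omega> r \<partial>P)" if "0 \<le> r" for r
    using integrable_cargo[OF M eps sig \<open>prob_space P\<close> W X_meas j sde that] by auto
  define k where "k = real (occ M (j t))"
  define Y where "Y \<omega> r = X \<omega> r - \<sigma> * W \<omega> r" for \<omega> r
  define g where "g \<omega> r = (anchor_sum M j (X \<omega>) t - k * Y \<omega> r) / \<epsilon>" for \<omega> r
  define Z where "Z \<omega> s = Y \<omega> s + (k * \<sigma> / \<epsilon>) * integral {lo..s} (W \<omega>)" for \<omega> s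
  have "integrable P (\<lambda>\<omega>. X \<omega> r)" if "r \<in> {0..t}" for r
    using moments(2) that by auto
  note anchor = expectation_sum_cargoZ[where N = M and j = j and X = X, OF j(1) less_imp_le[OF t] this]
  have Z_int: "integrable P (\<lambda>\<omega>. Z \<omega> s)" and E_Z: "(\<integral>\<omega>. Z \<omega> s \<partial>P) = (\<integral>\<omega>. X \<omega> s \<partial>P)"
    if s: "s \<in> {lo..hi}" for s
  proof -
    have Wp: "integrable_continuous_process P W lo s (1 + s)"
      using brownian_integrable_continuous_process(1)[OF W] lohi by simp
    have "integrable P (\<lambda>\<omega>. integral {lo..s} (W \<omega>))" "(\<integral>\<omega>. integral {lo..s} (W \<omega>) \<partial>P) = 0"
      using integrable_continuous_process.integrable_path_integral[OF Wp]
        integrable_continuous_process.expectation_path_integral_eq_0[OF Wp] brownian_moments(2)[OF W] lohi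
      by auto
    with moments(1,3)[of s] s lohi
    show "integrable P (\<lambda>\<omega>. Z \<omega> s)" "(\<integral>\<omega>. Z \<omega> s \<partial>P) = (\<integral>\<omega>. X \<omega> s \<partial>P)"
      unfolding Z_def Y_def by auto
  qed
  have "((\<lambda>s. \<integral>\<omega>. Z \<omega> s \<partial>P) has_real_derivative (\<integral>\<omega>. g \<omega> t \<partial>P)) (at t)"
  proof (rule has_real_derivative_expectation_integral[OF lohi(2,3) _ Z_int])
    show "Z \<omega> s = Z \<omega> lo + integral {lo..s} (g \<omega>)" if \<omega>: "\<omega> \<in> space P" and "s \<in> {lo..hi}" for \<omega> s
      using cargo_frozen_shift[where j = j and t = t, OF sde[OF \<omega>] frozen_on tI _
          continuous_on_subset[OF brownian_continuous[OF W \<omega>]]] that lohi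
      unfolding Z_def g_def Y_def k_def by auto
    show "continuous_on {lo..hi} (g \<omega>)" if \<omega>: "\<omega> \<in> space P" for \<omega>
    proof -
      have "continuous_on {0..hi} (Y \<omega>)"
        unfolding Y_def using sde[OF \<omega>] lohi by (intro continuous_on_has_integral_indefinite) auto
      then have "continuous_on {lo..hi} (Y \<omega>)"
        by (rule continuous_on_subset) (use lohi in auto)
      then show ?thesis
        unfolding g_def using eps by (intro continuous_intros) auto
    qed
    show "(\<lambda>\<omega>. g \<omega> t) \<in> borel_measurable P"
      unfolding g_def Y_def using anchor(1) moments(1)[of t] t
      by (auto intro!: borel_measurable_integrable)
    show "integrable P (\<lambda>\<omega>. (\<bar>anchor_sum M j (X \<omega>) t\<bar> + k * D \<omega>) / \<epsilon>)"
      using anchor(1) D(1) by auto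
    show "\<bar>g \<omega> r\<bar> \<le> (\<bar>anchor_sum M j (X \<omega>) t\<bar> + k * D \<omega>) / \<epsilon>"
      if "\<omega> \<in> space P" "r \<in> {lo..hi}" for \<omega> r
    proof -
      have "\<bar>Y \<omega> r\<bar> \<le> D \<omega>"
        unfolding Y_def using D(2)[OF that(1), of r] that(2) lohi by auto
      then have "\<bar>k * Y \<omega> r\<bar> \<le> k * D \<omega>"
        unfolding k_def by (simp add: abs_mult mult_left_mono)
      then have "\<bar>anchor_sum M j (X \<omega>) t - k * Y \<omega> r\<bar> \<le> \<bar>anchor_sum M j (X \<omega>) t\<bar> + k * D \<omega>"
        using abs_triangle_ineq4[of "anchor_sum M j (X \<omega>) t" "k * Y \<omega> r"] by linarith
      then show ?thesis
        unfolding g_def using eps by (simp add: abs_divide divide_right_mono)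
    qed
  qed
  then have "((\<lambda>s. \<integral>\<omega>. X \<omega> s \<partial>P) has_real_derivative (\<integral>\<omega>. g \<omega> t \<partial>P)) (at t)"
    by (rule has_field_derivative_transform_within_open[of _ _ _ "{lo<..<hi}"]) (use lohi E_Z in auto)
  moreover have "(\<Sum>i\<in>{1..M}. (\<integral>\<omega>. cargoZ j (X \<omega>) i t \<partial>P) - (\<integral>\<omega>. X \<omega> t \<partial>P))
      = \<epsilon> * (\<integral>\<omega>. g \<omega> t \<partial>P)"
  proof -
    have "(\<Sum>i\<in>{1..M}. (\<integral>\<omega>. cargoZ j (X \<omega>) i t \<partial>P) - (\<integral>\<omega>. X \<omega> t \<partial>P))
        = (\<integral>\<omega>. anchor_sum M j (X \<omega>) t \<partial>P) - k * (\<integral>\<omega>. X \<omega> t \<partial>P)"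
      unfolding k_def by (rule anchor(2))
    also have "\<dots> = \<epsilon> * (\<integral>\<omega>. g \<omega> t \<partial>P)"
      unfolding g_def Y_def using anchor(1) moments[of t] t eps by simp
    finally show ?thesis .
  qed
  ultimately show ?thesis
    using eps by simp
qed

theorem proposition4p1:
  fixes M :: nat and \<epsilon> \<sigma> :: real
    and lon loff lstep :: "nat \<Rightarrow> real"
    and PJ :: "'a measure" and PW :: "'b measure"
    and J :: "'a \<Rightarrow> real \<Rightarrow> nat \<Rightarrow> nat option"
    and W :: "'b \<Rightarrow> real \<Rightarrow> real"
    and X :: "'a \<Rightarrow> 'b \<Rightarrow> real \<Rightarrow> real"
    and t :: real
  assumes M: "M \<ge> 1"
    and eps: "\<epsilon> > 0" and sig: "\<sigma> > 0"
    and rates: "\<And>m. m \<le> M \<Longrightarrow> lon m > 0 \<and> loff m > 0 \<and> lstep m > 0"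
    and PJ: "prob_space PJ" and PW: "prob_space PW"
    and Jproc: "motor_process M lon loff lstep PJ J"
    and Wbm: "brownian PW W"
    and Xmeas: "\<And>a s. (\<lambda>b. X a b s) \<in> borel_measurable PW"
    and Xsde: "\<And>a b s. a \<in> space PJ \<Longrightarrow> b \<in> space PW \<Longrightarrow> s \<ge> 0 \<Longrightarrow>
        ((\<lambda>r. (1 / \<epsilon>) * (\<Sum>i\<in>{1..M}. cargoZ (J a) (X a b) i r - X a b r))
           has_integral (X a b s - \<sigma> * W b s)) {0..s}"
    and t: "t > 0"
  shows "AE a in PJ.
           ((\<lambda>s. \<integral>b. X a b s \<partial>PW) has_real_derivative
              (1 / \<epsilon>) * (\<Sum>i\<in>{1..M}. (\<integral>b. cargoZ (J a) (X a b) i t \<partial>PW) - (\<integral>b. X a b t \<partial>PW)))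
           (at t)"
proof -
  interpret motor_rates M lon loff lstep
    using rates by unfold_locales (auto intro: less_imp_le)
  have "AE a in PJ. \<exists>d>0. \<forall>r. t - d < r \<and> r < t + d \<longrightarrow> J a r = J a t"
    by (rule AE_no_jump_at[OF PJ Jproc t])
  then show ?thesis
  proof (rule AE_mp[OF _ AE_I2], intro impI)
    fix a assume a: "a \<in> space PJ"
      and frozen: "\<exists>d>0. \<forall>r. t - d < r \<and> r < t + d \<longrightarrow> J a r = J a t"
    show "((\<lambda>s. \<integral>b. X a b s \<partial>PW) has_real_derivative
        (1 / \<epsilon>) * (\<Sum>i\<in>{1..M}. (\<integral>b. cargoZ (J a) (X a b) i t \<partial>PW) - (\<integral>b. X a b t \<partial>PW))) (at t)"
      by (rule expected_cargo_has_derivative[OF M eps less_imp_le[OF sig] PW Wbm Xmeas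
          motor_process_path[OF Jproc a] Xsde[OF a] t frozen])
  qed
qed

end
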